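(* Let $\mathfrak{g}$ be a finite-dimensional Leibniz algebra with finite-dimensional Schur $\mathrm{Lie}$-multiplier, and let $0\to\mathfrak{m}_i\to\mathfrak{p}_i\xrightarrow{\psi_i}\mathfrak{g}\to0$, $i=1,2$, be two $\mathrm{Lie}$-stem covers of $\mathfrak{g}$. Then $Z_{\mathrm{Lie}}(\mathfrak{p}_1)/\mathfrak{m}_1\cong Z_{\mathrm{Lie}}(\mathfrak{p}_2)/\mathfrak{m}_2$.
   Context: Fix a field $\mathbb{K}$ with $\frac12\in\mathbb{K}$. A Leibniz algebra is a $\mathbb{K}$-vector space with a bilinear bracket satisfying $[x,[y,z]]=[[x,y],z]-[[x,z],y]$. $\mathfrak{p}^{\mathrm{ann}}$ is the span of all $[x,x]$, $\mathfrak{p}_{\mathrm{Lie}}=\mathfrak{p}/\mathfrak{p}^{\mathrm{ann}}$. $[\mathfrak{m},\mathfrak{n}]_{\mathrm{Lie}}$ is the span of all $[m,n]+[n,m]$. $Z_{\mathrm{Lie}}(\mathfrak{p})=\{z:[x,z]+[z,x]=0\ \forall x\in\mathfrak{p}\}$. For a free presentation $0\to\mathfrak{r}\to\mathfrak{f}\to\mathfrak{g}\to0$ ($\mathfrak{f}$ free Leibniz), the Schur $\mathrm{Lie}$-multiplier is $\mathcal{M}^{\mathrm{Lie}}(\mathfrak{g})=\frac{\mathfrak{r}\cap[\mathfrak{f},\mathfrak{f}]_{\mathrm{Lie}}}{[\mathfrak{f},\mathfrak{r}]_{\mathrm{Lie}}}$. An extension $0\to\mathfrak{m}\to\mathfrak{p}\to\mathfrak{g}\to0$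 is a $\mathrm{Lie}$-stem cover if $\mathfrak{m}\subseteq Z_{\mathrm{Lie}}(\mathfrak{p})$, the induced map $\mathfrak{p}_{\mathrm{Lie}}\to\mathfrak{g}_{\mathrm{Lie}}$ is an isomorphism, and the induced map $\mathcal{M}^{\mathrm{Lie}}(\mathfrak{p})\to\mathcal{M}^{\mathrm{Lie}}(\mathfrak{g})$ is zero. *)

theory Defs
  imports Main
begin

record ('k, 'a) lalg =
  lcar :: "'a set"
  lzero :: 'a
  ladd :: "'a \<Rightarrow> 'a \<Rightarrow> 'a"
  lsmult :: "'k \<Rightarrow> 'a \<Rightarrow> 'a"
  lbr :: "'a \<Rightarrow> 'a \<Rightarrow> 'a"

definition vspace :: "('k::field, 'a, 'z) lalg_scheme \<Rightarrow> bool" where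
  "vspace A \<longleftrightarrow>
     lzero A \<in> lcar A \<and>
     (\<forall>x\<in>lcar A. \<forall>y\<in>lcar A. ladd A x y \<in> lcar A) \<and>
     (\<forall>c. \<forall>x\<in>lcar A. lsmult A c x \<in> lcar A) \<and>
     (\<forall>x\<in>lcar A. \<forall>y\<in>lcar A. \<forall>z\<in>lcar A. ladd A (ladd A x y) z = ladd A x (ladd A y z)) \<and>
     (\<forall>x\<in>lcar A. \<forall>y\<in>lcar A. ladd A x y = ladd A y x) \<and>
     (\<forall>x\<in>lcar A. ladd A (lzero A) x = x) \<and>
     (\<forall>x\<in>lcar A. ladd A x (lsmult A (-1) x) = lzero A) \<and>
     (\<forall>c. \<forall>x\<in>lcar A. \<forall>y\<in>lcar A. lsmult A c (ladd A x y) = ladd A (lsmult A c x) (lsmult A c y)) \<and>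
     (\<forall>c d. \<forall>x\<in>lcar A. lsmult A (c + d) x = ladd A (lsmult A c x) (lsmult A d x)) \<and>
     (\<forall>c d. \<forall>x\<in>lcar A. lsmult A c (lsmult A d x) = lsmult A (c * d) x) \<and>
     (\<forall>x\<in>lcar A. lsmult A 1 x = x)"

definition leibniz :: "('k::field, 'a, 'z) lalg_scheme \<Rightarrow> bool" where
  "leibniz A \<longleftrightarrow> vspace A \<and>
     (\<forall>x\<in>lcar A. \<forall>y\<in>lcar A. lbr A x y \<in> lcar A) \<and>
     (\<forall>x\<in>lcar A. \<forall>y\<in>lcar A. \<forall>z\<in>lcar A. lbr A (ladd A x y) z = ladd A (lbr A x z) (lbr A y z)) \<and>
     (\<forall>x\<in>lcar A. \<forall>y\<in>lcar A. \<forall>z\<in>lcar A. lbr A x (ladd A y z) = ladd A (lbr A x y) (lbr A x z)) \<and>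
     (\<forall>c. \<forall>x\<in>lcar A. \<forall>y\<in>lcar A. lbr A (lsmult A c x) y = lsmult A c (lbr A x y)) \<and>
     (\<forall>c. \<forall>x\<in>lcar A. \<forall>y\<in>lcar A. lbr A x (lsmult A c y) = lsmult A c (lbr A x y)) \<and>
     (\<forall>x\<in>lcar A. \<forall>y\<in>lcar A. \<forall>z\<in>lcar A.
        lbr A x (lbr A y z) = ladd A (lbr A (lbr A x y) z) (lsmult A (-1) (lbr A (lbr A x z) y)))"

definition subspace :: "('k::field, 'a, 'z) lalg_scheme \<Rightarrow> 'a set \<Rightarrow> bool" where
  "subspace A S \<longleftrightarrow> S \<subseteq> lcar A \<and> lzero A \<in> S \<and>
     (\<forall>x\<in>S. \<forall>y\<in>S. ladd A x y \<in> S) \<and> (\<forall>c. \<forall>x\<in>S. lsmult A c x \<in> S)"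

definition lspan :: "('k::field, 'a, 'z) lalg_scheme \<Rightarrow> 'a set \<Rightarrow> 'a set" where
  "lspan A S = lcar A \<inter> \<Inter> {T. subspace A T \<and> S \<inter> lcar A \<subseteq> T}"

definition ideal :: "('k::field, 'a, 'z) lalg_scheme \<Rightarrow> 'a set \<Rightarrow> bool" where
  "ideal A I \<longleftrightarrow> subspace A I \<and>
     (\<forall>x\<in>lcar A. \<forall>i\<in>I. lbr A x i \<in> I \<and> lbr A i x \<in> I)"

definition ideal_gen :: "('k::field, 'a, 'z) lalg_scheme \<Rightarrow> 'a set \<Rightarrow> 'a set" where
  "ideal_gen A S = lcar A \<inter> \<Inter> {I. ideal A I \<and> S \<inter> lcar A \<subseteq> I}"

definition fin_dim :: "('k::field, 'a, 'z) lalg_scheme \<Rightarrow> bool" where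
  "fin_dim A \<longleftrightarrow> (\<exists>S. finite S \<and> S \<subseteq> lcar A \<and> lspan A S = lcar A)"

definition coset :: "('k, 'a, 'z) lalg_scheme \<Rightarrow> 'a set \<Rightarrow> 'a \<Rightarrow> 'a set" where
  "coset A I a = (\<lambda>i. ladd A a i) ` I"

definition qrep :: "('k, 'a, 'z) lalg_scheme \<Rightarrow> 'a set \<Rightarrow> 'a set \<Rightarrow> 'a" where
  "qrep A I X = (SOME a. a \<in> lcar A \<and> X = coset A I a)"

definition quot :: "('k, 'a, 'z) lalg_scheme \<Rightarrow> 'a set \<Rightarrow> ('k, 'a set) lalg" where
  "quot A I = \<lparr> lcar = coset A I ` lcar A,
                lzero = coset A I (lzero A),
                ladd = (\<lambda>X Y. coset A I (ladd A (qrep A I X) (qrep A I Y))),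
                lsmult = (\<lambda>c X. coset A I (lsmult A c (qrep A I X))),
                lbr = (\<lambda>X Y. coset A I (lbr A (qrep A I X) (qrep A I Y))) \<rparr>"

definition restr :: "('k, 'a) lalg \<Rightarrow> 'a set \<Rightarrow> ('k, 'a) lalg" where
  "restr A S = A\<lparr>lcar := S\<rparr>"

definition hom :: "('k, 'a) lalg \<Rightarrow> ('k, 'b) lalg \<Rightarrow> ('a \<Rightarrow> 'b) \<Rightarrow> bool" where
  "hom A B h \<longleftrightarrow> h ` lcar A \<subseteq> lcar B \<and>
     (\<forall>x\<in>lcar A. \<forall>y\<in>lcar A. h (ladd A x y) = ladd B (h x) (h y)) \<and>
     (\<forall>c. \<forall>x\<in>lcar A. h (lsmult A c x) = lsmult B c (h x)) \<and>
     (\<forall>x\<in>lcar A. \<forall>y\<in>lcar A. h (lbr A x y) = lbr B (h x) (h y))"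

definition iso :: "('k, 'a) lalg \<Rightarrow> ('k, 'b) lalg \<Rightarrow> ('a \<Rightarrow> 'b) \<Rightarrow> bool" where
  "iso A B h \<longleftrightarrow> hom A B h \<and> bij_betw h (lcar A) (lcar B)"

definition isomorphic :: "('k, 'a) lalg \<Rightarrow> ('k, 'b) lalg \<Rightarrow> bool" where
  "isomorphic A B \<longleftrightarrow> (\<exists>h. iso A B h)"

definition kerh :: "('k, 'a) lalg \<Rightarrow> ('k, 'b) lalg \<Rightarrow> ('a \<Rightarrow> 'b) \<Rightarrow> 'a set" where
  "kerh A B h = {x \<in> lcar A. h x = lzero B}"

definition ann :: "('k::field, 'a) lalg \<Rightarrow> 'a set" where
  "ann A = lspan A {lbr A x x | x. x \<in> lcar A}"

definition brLie :: "('k::field, 'a) lalg \<Rightarrow> 'a set \<Rightarrow> 'a set \<Rightarrow> 'a set" where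
  "brLie A M N = lspan A {ladd A (lbr A m n) (lbr A n m) | m n. m \<in> M \<and> n \<in> N}"

definition ZLie :: "('k::field, 'a) lalg \<Rightarrow> 'a set" where
  "ZLie A = {z \<in> lcar A. \<forall>x\<in>lcar A. ladd A (lbr A x z) (lbr A z x) = lzero A}"

definition lie_part :: "('k::field, 'a) lalg \<Rightarrow> ('k, 'a set) lalg" where
  "lie_part A = quot A (ann A)"

definition liemap :: "('k::field, 'a) lalg \<Rightarrow> ('k, 'b) lalg \<Rightarrow> ('a \<Rightarrow> 'b) \<Rightarrow> 'a set \<Rightarrow> 'b set" where
  "liemap A B h X = coset B (ann B) (h (qrep A (ann A) X))"

section \<open>Free Leibniz algebras (free magma algebra modulo the Leibniz identities)\<close>

datatype 'x tr = Lf 'x | Nd "'x tr" "'x tr"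

text \<open>Free non-associative algebra on X: finitely supported K-combinations of binary trees
  with leaves in X; bracket is grafting.\<close>
definition mag :: "'x set \<Rightarrow> ('k::field, 'x tr \<Rightarrow> 'k) lalg" where
  "mag X = \<lparr> lcar = {f. finite {t. f t \<noteq> 0} \<and> (\<forall>t. f t \<noteq> 0 \<longrightarrow> set_tr t \<subseteq> X)},
             lzero = (\<lambda>t. 0),
             ladd = (\<lambda>f g t. f t + g t),
             lsmult = (\<lambda>c f t. c * f t),
             lbr = (\<lambda>f g t. case t of Lf x \<Rightarrow> 0 | Nd l r \<Rightarrow> f l * g r) \<rparr>"

definition leib_rel :: "'x set \<Rightarrow> ('x tr \<Rightarrow> 'k::field) set" where
  "leib_rel X = {ladd (mag X) (lbr (mag X) a (lbr (mag X) b c))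
                   (lsmult (mag X) (-1)
                     (ladd (mag X) (lbr (mag X) (lbr (mag X) a b) c)
                        (lsmult (mag X) (-1) (lbr (mag X) (lbr (mag X) a c) b))))
                 | a b c. a \<in> lcar (mag X) \<and> b \<in> lcar (mag X) \<and> c \<in> lcar (mag X)}"

definition FLI :: "'x set \<Rightarrow> ('x tr \<Rightarrow> 'k::field) set" where
  "FLI X = ideal_gen (mag X) (leib_rel X)"

definition FL :: "'x set \<Rightarrow> ('k::field, ('x tr \<Rightarrow> 'k) set) lalg" where
  "FL X = quot (mag X) (FLI X)"

fun tr_ev :: "('k, 'a) lalg \<Rightarrow> 'a tr \<Rightarrow> 'a" where
  "tr_ev A (Lf x) = x"
| "tr_ev A (Nd l r) = lbr A (tr_ev A l) (tr_ev A r)"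

fun lsum_list :: "('k, 'a) lalg \<Rightarrow> 'a list \<Rightarrow> 'a" where
  "lsum_list A [] = lzero A"
| "lsum_list A (x # xs) = ladd A x (lsum_list A xs)"

text \<open>Linear extension of tree evaluation to the free magma algebra.\<close>
definition mag_ev :: "('k::field, 'a) lalg \<Rightarrow> ('a tr \<Rightarrow> 'k) \<Rightarrow> 'a" where
  "mag_ev A f = lsum_list A (map (\<lambda>t. lsmult A (f t) (tr_ev A t))
                   (SOME xs. distinct xs \<and> set xs = {t. f t \<noteq> 0}))"

definition proj :: "('k::field, 'a) lalg \<Rightarrow> ('a tr \<Rightarrow> 'k) set \<Rightarrow> 'a" where
  "proj A X = mag_ev A (qrep (mag (lcar A)) (FLI (lcar A)) X)"

definition rel :: "('k::field, 'a) lalg \<Rightarrow> ('a tr \<Rightarrow> 'k) set set" where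
  "rel A = kerh (FL (lcar A)) A (proj A)"

definition Mult :: "('k::field, 'a) lalg \<Rightarrow> ('k, ('a tr \<Rightarrow> 'k) set set) lalg" where
  "Mult A = (let F = FL (lcar A) in
     quot (restr F (rel A \<inter> brLie F (lcar F) (lcar F))) (brLie F (lcar F) (rel A)))"

definition magmap :: "('a \<Rightarrow> 'b) \<Rightarrow> ('a tr \<Rightarrow> 'k::field) \<Rightarrow> ('b tr \<Rightarrow> 'k)" where
  "magmap h f = (\<lambda>t. sum f {s. f s \<noteq> 0 \<and> map_tr h s = t})"

definition Fmap :: "('k::field, 'a) lalg \<Rightarrow> ('k, 'b) lalg \<Rightarrow> ('a \<Rightarrow> 'b)
                      \<Rightarrow> ('a tr \<Rightarrow> 'k) set \<Rightarrow> ('b tr \<Rightarrow> 'k) set" where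
  "Fmap A B h X = coset (mag (lcar B)) (FLI (lcar B))
                     (magmap h (qrep (mag (lcar A)) (FLI (lcar A)) X))"

definition Mmap :: "('k::field, 'a) lalg \<Rightarrow> ('k, 'b) lalg \<Rightarrow> ('a \<Rightarrow> 'b)
                      \<Rightarrow> ('a tr \<Rightarrow> 'k) set set \<Rightarrow> ('b tr \<Rightarrow> 'k) set set" where
  "Mmap A B h Y = (let FA = FL (lcar A); FB = FL (lcar B) in
     coset FB (brLie FB (lcar FB) (rel B))
       (Fmap A B h (qrep (restr FA (rel A \<inter> brLie FA (lcar FA) (lcar FA)))
                         (brLie FA (lcar FA) (rel A)) Y)))"

text \<open>The extension 0 \<rightarrow> ker \<psi> \<rightarrow> P \<rightarrow> G \<rightarrow> 0 given by a surjective homomorphism \<psi>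
  (m is identified with ker \<psi>).\<close>
definition lie_stem_cover :: "('k::field, 'a) lalg \<Rightarrow> ('k, 'b) lalg \<Rightarrow> ('a \<Rightarrow> 'b) \<Rightarrow> bool" where
  "lie_stem_cover P G \<psi> \<longleftrightarrow>
     leibniz P \<and> leibniz G \<and> hom P G \<psi> \<and> \<psi> ` lcar P = lcar G \<and>
     kerh P G \<psi> \<subseteq> ZLie P \<and>
     iso (lie_part P) (lie_part G) (liemap P G \<psi>) \<and>
     (\<forall>Y\<in>lcar (Mult P). Mmap P G \<psi> Y = lzero (Mult G))"

end

theory Submission
  imports Defs
begin

text \<open>
  Both quotients are isomorphic to the images of ZLie p1 and ZLie p2 in g, so it suffices to show
  that these images coincide. Let w be Lie-central in p1, u = \<psi>1 w, and let s1, s2 be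
  set-theoretic sections of \<psi>1, \<psi>2. Since ker \<psi>1 is Lie-central, so is s1 u; hence for every v in g
  the element [s1 v, s1 u] + [s1 u, s1 v] of the free Leibniz algebra on p1 lies in r \<inter> [f,f]_Lie.
  As the induced map of Schur Lie-multipliers vanishes, its image [v, u] + [u, v] in the free
  Leibniz algebra on g lies in [f, r]_Lie. The homomorphism from the free Leibniz algebra on g
  to p2 extending s2 maps r into ker \<psi>2, which is Lie-central, so it kills [f, r]_Lie. Hence
  [s2 v, s2 u] + [s2 u, s2 v] = 0 for all v, and the preimage s2 u of u is Lie-central in p2,
  again because ker \<psi>2 is Lie-central.
\<close>

section \<open>Vector spaces, subspaces and quotients\<close>

abbreviation ldiff :: "('k::field, 'a) lalg \<Rightarrow> 'a \<Rightarrow> 'a \<Rightarrow> 'a" where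
  "ldiff A x y \<equiv> ladd A x (lsmult A (-1) y)"

context
  fixes A :: "('k::field, 'a) lalg"
  assumes vs: "vspace A"
begin

lemma
  shows vs_zero: "lzero A \<in> lcar A"
    and vs_add: "x \<in> lcar A \<Longrightarrow> y \<in> lcar A \<Longrightarrow> ladd A x y \<in> lcar A"
    and vs_smult: "x \<in> lcar A \<Longrightarrow> lsmult A c x \<in> lcar A"
    and vs_assoc: "x \<in> lcar A \<Longrightarrow> y \<in> lcar A \<Longrightarrow> z \<in> lcar A \<Longrightarrow>
      ladd A (ladd A x y) z = ladd A x (ladd A y z)"
    and vs_comm: "x \<in> lcar A \<Longrightarrow> y \<in> lcar A \<Longrightarrow> ladd A x y = ladd A y x"
    and vs_zero_l: "x \<in> lcar A \<Longrightarrow> ladd A (lzero A) x = x"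
    and vs_neg: "x \<in> lcar A \<Longrightarrow> ldiff A x x = lzero A"
    and vs_dist1: "x \<in> lcar A \<Longrightarrow> y \<in> lcar A \<Longrightarrow>
      lsmult A c (ladd A x y) = ladd A (lsmult A c x) (lsmult A c y)"
    and vs_dist2: "x \<in> lcar A \<Longrightarrow> lsmult A (c + d) x = ladd A (lsmult A c x) (lsmult A d x)"
    and vs_sassoc: "x \<in> lcar A \<Longrightarrow> lsmult A c (lsmult A d x) = lsmult A (c * d) x"
    and vs_one: "x \<in> lcar A \<Longrightarrow> lsmult A 1 x = x"
  using vs unfolding vspace_def by auto

lemma vs_zero_r: "x \<in> lcar A \<Longrightarrow> ladd A x (lzero A) = x"
  using vs_comm[OF _ vs_zero, of x] vs_zero_l[of x] by simp

lemma vs_lcomm: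
  assumes "x \<in> lcar A" "y \<in> lcar A" "z \<in> lcar A"
  shows "ladd A x (ladd A y z) = ladd A y (ladd A x z)"
proof -
  have "ladd A x (ladd A y z) = ladd A (ladd A x y) z" by (rule vs_assoc[OF assms, symmetric])
  also have "\<dots> = ladd A (ladd A y x) z" by (simp only: vs_comm[OF assms(1,2)])
  also have "\<dots> = ladd A y (ladd A x z)" by (rule vs_assoc[OF assms(2,1,3)])
  finally show ?thesis .
qed

lemma vs_swap4:
  assumes "a \<in> lcar A" "b \<in> lcar A" "c \<in> lcar A" "d \<in> lcar A"
  shows "ladd A (ladd A a b) (ladd A c d) = ladd A (ladd A a c) (ladd A b d)"
proof -
  have "ladd A (ladd A a b) (ladd A c d) = ladd A a (ladd A b (ladd A c d))"
    using assms by (simp only: vs_assoc vs_add)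
  also have "\<dots> = ladd A a (ladd A c (ladd A b d))" by (simp only: vs_lcomm[OF assms(2-4)])
  also have "\<dots> = ladd A (ladd A a c) (ladd A b d)"
    using assms by (simp only: vs_assoc vs_add)
  finally show ?thesis .
qed

lemma vs_add_ldiff:
  assumes "x \<in> lcar A" "y \<in> lcar A"
  shows "ladd A y (ldiff A x y) = x"
proof -
  have "ladd A y (ldiff A x y) = ladd A x (ldiff A y y)"
    by (rule vs_lcomm[OF assms(2,1) vs_smult[OF assms(2)]])
  also have "\<dots> = x" by (simp only: vs_neg[OF assms(2)] vs_zero_r[OF assms(1)])
  finally show ?thesis .
qed

lemma vs_ldiff_add:
  assumes "x \<in> lcar A" "y \<in> lcar A"
  shows "ldiff A (ladd A y x) y = x"
proof -
  have "ldiff A (ladd A y x) y = ldiff A (ladd A x y) y" by (simp only: vs_comm[OF assms])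
  also have "\<dots> = ladd A x (ldiff A y y)" by (rule vs_assoc[OF assms vs_smult[OF assms(2)]])
  also have "\<dots> = x" by (simp only: vs_neg[OF assms(2)] vs_zero_r[OF assms(1)])
  finally show ?thesis .
qed

lemma vs_ldiff_eq_zero:
  assumes "x \<in> lcar A" "y \<in> lcar A" "ldiff A x y = lzero A"
  shows "x = y"
  using vs_add_ldiff[OF assms(1,2)] vs_zero_r[OF assms(2)] unfolding assms(3) by simp

lemma vs_smult_0:
  assumes "x \<in> lcar A"
  shows "lsmult A 0 x = lzero A"
proof -
  let ?s = "lsmult A 0 x"
  have s: "?s \<in> lcar A" by (rule vs_smult[OF assms])
  have "ladd A ?s ?s = ?s" using vs_dist2[OF assms, of 0 0] by simp
  then show ?thesis using vs_ldiff_add[OF s s] vs_neg[OF s] by simp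
qed

lemma vs_smult_zero: "lsmult A c (lzero A) = lzero A"
  using vs_sassoc[OF vs_zero, of c 0] vs_smult_0[OF vs_zero] by simp

lemma vs_ldiff_zero: "x \<in> lcar A \<Longrightarrow> ldiff A x (lzero A) = x"
  by (simp only: vs_smult_zero vs_zero_r)

lemma vs_smult_neg: "x \<in> lcar A \<Longrightarrow> lsmult A c (lsmult A (-1) x) = lsmult A (-1) (lsmult A c x)"
  by (simp only: vs_sassoc mult.commute)

lemma vs_neg_ldiff:
  assumes "x \<in> lcar A" "y \<in> lcar A"
  shows "lsmult A (-1) (ldiff A x y) = ldiff A y x"
proof -
  have "lsmult A (-1) (ldiff A x y) = ladd A (lsmult A (-1) x) y"
    using assms by (simp only: vs_dist1 vs_smult vs_sassoc) (simp add: vs_one)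
  then show ?thesis by (simp only: vs_comm[OF vs_smult[OF assms(1)] assms(2)])
qed

lemma vs_ldiff_add2:
  assumes "x \<in> lcar A" "y \<in> lcar A" "z \<in> lcar A" "w \<in> lcar A"
  shows "ldiff A (ladd A x y) (ladd A z w) = ladd A (ldiff A x z) (ldiff A y w)"
  unfolding vs_dist1[OF assms(3,4)] by (rule vs_swap4[OF assms(1,2) vs_smult vs_smult]) (fact assms)+

lemma vs_ldiff_trans:
  assumes "x \<in> lcar A" "y \<in> lcar A" "z \<in> lcar A"
  shows "ladd A (ldiff A x y) (ldiff A y z) = ldiff A x z"
proof -
  have my: "lsmult A (-1) y \<in> lcar A" and mz: "lsmult A (-1) z \<in> lcar A"
    using assms by (simp_all add: vs_smult)
  have "ladd A (ldiff A x y) (ldiff A y z) = ladd A x (ladd A (ladd A (lsmult A (-1) y) y) (lsmult A (-1) z))"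
    using assms my mz by (simp only: vs_assoc vs_add)
  also have "\<dots> = ldiff A x z"
    by (simp only: vs_comm[OF my assms(2)] vs_neg[OF assms(2)] vs_zero_l[OF mz])
  finally show ?thesis .
qed

lemma vs_ldiff_smult:
  assumes "x \<in> lcar A" "y \<in> lcar A"
  shows "ldiff A (lsmult A c x) (lsmult A c y) = lsmult A c (ldiff A x y)"
  unfolding vs_dist1[OF assms(1) vs_smult[OF assms(2)]] vs_smult_neg[OF assms(2)] ..

end

lemma subspace_ldiff:
  fixes A :: "('k::field, 'a) lalg"
  shows "subspace A I \<Longrightarrow> x \<in> I \<Longrightarrow> y \<in> I \<Longrightarrow> ldiff A x y \<in> I"
  unfolding subspace_def by blast

lemma subspace_car: "subspace A I \<Longrightarrow> I \<subseteq> lcar A"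
  unfolding subspace_def by blast

lemma subspace_zero: "subspace A I \<Longrightarrow> lzero A \<in> I"
  unfolding subspace_def by blast

lemma subspace_add: "subspace A I \<Longrightarrow> x \<in> I \<Longrightarrow> y \<in> I \<Longrightarrow> ladd A x y \<in> I"
  unfolding subspace_def by blast

lemma subspace_smult: "subspace A I \<Longrightarrow> x \<in> I \<Longrightarrow> lsmult A c x \<in> I"
  unfolding subspace_def by blast

lemma subspace_add_cancel:
  fixes A :: "('k::field, 'a) lalg"
  assumes "vspace A" "subspace A I" "x \<in> lcar A" "i \<in> I" "ladd A x i \<in> I"
  shows "x \<in> I"
proof -
  have "i \<in> lcar A" using assms(2,4) subspace_car by blast
  then have "ldiff A (ladd A x i) i = x" using vs_comm[OF assms(1,3)] vs_ldiff_add[OF assms(1,3)] by simp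
  then show ?thesis using subspace_ldiff[OF assms(2,5,4)] by simp
qed

context
  fixes A :: "('k::field, 'a) lalg" and I :: "'a set"
  assumes vs: "vspace A" and sub: "subspace A I"
begin

lemma coset_self: "a \<in> lcar A \<Longrightarrow> a \<in> coset A I a"
  unfolding coset_def using subspace_zero[OF sub] vs_zero_r[OF vs] by (metis image_eqI)

lemma coset_subset:
  assumes a: "a \<in> lcar A" and b: "b \<in> lcar A" and d: "ldiff A a b \<in> I"
  shows "coset A I a \<subseteq> coset A I b"
proof
  fix z assume "z \<in> coset A I a"
  then obtain i where i: "i \<in> I" "z = ladd A a i" unfolding coset_def by blast
  have ic: "i \<in> lcar A" and dc: "ldiff A a b \<in> lcar A" using i d subspace_car[OF sub] by auto
  have "z = ladd A (ladd A b (ldiff A a b)) i" using i(2) vs_add_ldiff[OF vs a b] by simp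
  also have "\<dots> = ladd A b (ladd A (ldiff A a b) i)" by (rule vs_assoc[OF vs b dc ic])
  finally have "z = ladd A b (ladd A (ldiff A a b) i)" .
  then show "z \<in> coset A I b" unfolding coset_def using subspace_add[OF sub d i(1)] by blast
qed

lemma coset_eq_iff:
  assumes a: "a \<in> lcar A" and b: "b \<in> lcar A"
  shows "coset A I a = coset A I b \<longleftrightarrow> ldiff A a b \<in> I"
proof
  assume "coset A I a = coset A I b"
  then obtain i where i: "i \<in> I" "a = ladd A b i" using coset_self[OF a] unfolding coset_def by auto
  have "i \<in> lcar A" using i(1) subspace_car[OF sub] by blast
  then show "ldiff A a b \<in> I" using i vs_ldiff_add[OF vs _ b] by simp
next
  assume d: "ldiff A a b \<in> I"
  have "ldiff A b a \<in> I" using subspace_smult[OF sub d, of "-1"] vs_neg_ldiff[OF vs a b] by simp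
  then show "coset A I a = coset A I b" using coset_subset a b d by blast
qed

lemma coset_eqD:
  assumes a: "a \<in> lcar A" and b: "b \<in> lcar A" and e: "coset A I a = coset A I b"
  obtains i where "i \<in> I" "a = ladd A b i"
proof
  show "ldiff A a b \<in> I" using coset_eq_iff[OF a b] e by blast
  show "a = ladd A b (ldiff A a b)" by (rule vs_add_ldiff[OF vs a b, symmetric])
qed

lemma coset_eq_zero_iff: "a \<in> lcar A \<Longrightarrow> coset A I a = coset A I (lzero A) \<longleftrightarrow> a \<in> I"
  using coset_eq_iff[OF _ vs_zero[OF vs], of a] vs_ldiff_zero[OF vs, of a] by simp

end

lemma qrep_coset:
  assumes "b \<in> lcar A"
  shows "qrep A I (coset A I b) \<in> lcar A" "coset A I (qrep A I (coset A I b)) = coset A I b"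
proof -
  have "qrep A I (coset A I b) \<in> lcar A \<and> coset A I b = coset A I (qrep A I (coset A I b))"
    unfolding qrep_def by (rule someI[of _ b]) (use assms in simp)
  then show "qrep A I (coset A I b) \<in> lcar A" "coset A I (qrep A I (coset A I b)) = coset A I b"
    by simp_all
qed

lemma lcar_quot: "lcar (quot A I) = coset A I ` lcar A"
  and lzero_quot: "lzero (quot A I) = coset A I (lzero A)"
  unfolding quot_def by simp_all

context
  fixes A :: "('k::field, 'a) lalg" and I :: "'a set"
  assumes vs: "vspace A" and sub: "subspace A I"
begin

lemma quot_add:
  assumes a: "a \<in> lcar A" and b: "b \<in> lcar A"
  shows "ladd (quot A I) (coset A I a) (coset A I b) = coset A I (ladd A a b)"
proof -
  let ?a = "qrep A I (coset A I a)" and ?b = "qrep A I (coset A I b)"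
  note qa = qrep_coset[OF a, of I] and qb = qrep_coset[OF b, of I]
  have "ldiff A ?a a \<in> I" "ldiff A ?b b \<in> I"
    using coset_eq_iff[OF vs sub qa(1) a] coset_eq_iff[OF vs sub qb(1) b] qa(2) qb(2) by auto
  then have "ldiff A (ladd A ?a ?b) (ladd A a b) \<in> I"
    using vs_ldiff_add2[OF vs qa(1) qb(1) a b] subspace_add[OF sub] by simp
  then have "coset A I (ladd A ?a ?b) = coset A I (ladd A a b)"
    using coset_eq_iff[OF vs sub vs_add[OF vs qa(1) qb(1)] vs_add[OF vs a b]] by blast
  then show ?thesis unfolding quot_def by simp
qed

lemma quot_smult:
  assumes a: "a \<in> lcar A"
  shows "lsmult (quot A I) c (coset A I a) = coset A I (lsmult A c a)"
proof -
  let ?a = "qrep A I (coset A I a)"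
  note qa = qrep_coset[OF a, of I]
  have "ldiff A ?a a \<in> I" using coset_eq_iff[OF vs sub qa(1) a] qa(2) by auto
  then have "ldiff A (lsmult A c ?a) (lsmult A c a) \<in> I"
    using vs_ldiff_smult[OF vs qa(1) a] subspace_smult[OF sub] by simp
  then have "coset A I (lsmult A c ?a) = coset A I (lsmult A c a)"
    using coset_eq_iff[OF vs sub vs_smult[OF vs qa(1)] vs_smult[OF vs a]] by blast
  then show ?thesis unfolding quot_def by simp
qed

lemma vspace_quot: "vspace (quot A I)"
  unfolding vspace_def lcar_quot lzero_quot
  by (intro conjI ballI allI; (elim imageE)?)
    (simp_all add: quot_add quot_smult vs_zero[OF vs] vs_add[OF vs] vs_smult[OF vs] vs_assoc[OF vs]
      vs_comm[OF vs] vs_lcomm[OF vs] vs_zero_l[OF vs] vs_zero_r[OF vs] vs_neg[OF vs] vs_dist1[OF vs] vs_dist2[OF vs] vs_sassoc[OF vs]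
      vs_one[OF vs])

end

lemma lcar_restr: "lcar (restr A S) = S"
  unfolding restr_def by simp

lemma coset_restr: "coset (restr A S) I a = coset A I a"
  unfolding coset_def restr_def by simp

lemma quot_restr_ops:
  "lcar (quot (restr A S) I) = coset A I ` S"
  "ladd (quot (restr A S) I) X Y = coset A I (ladd A (qrep (restr A S) I X) (qrep (restr A S) I Y))"
  "lsmult (quot (restr A S) I) c X = coset A I (lsmult A c (qrep (restr A S) I X))"
  "lbr (quot (restr A S) I) X Y = coset A I (lbr A (qrep (restr A S) I X) (qrep (restr A S) I Y))"
  "lzero (quot (restr A S) I) = coset A I (lzero A)"
  unfolding quot_def by (simp_all add: coset_restr, simp_all add: restr_def)

lemma qrep_restr:
  assumes "X \<in> lcar (quot (restr A S) I)"
  shows "qrep (restr A S) I X \<in> S" "coset A I (qrep (restr A S) I X) = X"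
proof -
  obtain z where z: "z \<in> S" "X = coset A I z" using assms unfolding quot_restr_ops by blast
  have "qrep (restr A S) I X \<in> S \<and> X = coset A I (qrep (restr A S) I X)"
    unfolding qrep_def coset_restr lcar_restr
    by (rule someI[of "\<lambda>a. a \<in> S \<and> X = coset A I a" z]) (use z in simp)
  then show "qrep (restr A S) I X \<in> S" "coset A I (qrep (restr A S) I X) = X" by simp_all
qed

context
  fixes A :: "('k::field, 'a) lalg"
  assumes vs: "vspace A"
begin

lemma lsum_closed: "set xs \<subseteq> lcar A \<Longrightarrow> lsum_list A xs \<in> lcar A"
  by (induction xs) (auto simp: vs_zero[OF vs] vs_add[OF vs])

lemma lsum_mid: "set (y1 @ x # y2) \<subseteq> lcar A \<Longrightarrow>
   lsum_list A (y1 @ x # y2) = ladd A x (lsum_list A (y1 @ y2))"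
proof (induction y1)
  case Nil then show ?case by simp
next
  case (Cons a y1)
  have c: "lsum_list A (y1 @ y2) \<in> lcar A" "a \<in> lcar A" "x \<in> lcar A"
    using Cons.prems lsum_closed[of "y1 @ y2"] by auto
  have "lsum_list A ((a # y1) @ x # y2) = ladd A a (ladd A x (lsum_list A (y1 @ y2)))"
    using Cons by simp
  also have "\<dots> = ladd A x (ladd A a (lsum_list A (y1 @ y2)))" by (rule vs_lcomm[OF vs c(2) c(3) c(1)])
  finally show ?case by simp
qed

lemma lsum_filter: "\<forall>t\<in>set L. g t \<in> lcar A \<Longrightarrow> \<forall>t\<in>set L. \<not> P t \<longrightarrow> g t = lzero A \<Longrightarrow>
   lsum_list A (map g L) = lsum_list A (map g (filter P L))"
proof (induction L)
  case Nil then show ?case by simp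
next
  case (Cons a L)
  have c: "lsum_list A (map g (filter P L)) \<in> lcar A"
    using Cons.prems by (intro lsum_closed) auto
  show ?case
  proof (cases "P a")
    case True then show ?thesis using Cons by simp
  next
    case False then show ?thesis using Cons vs_zero_l[OF vs c] by simp
  qed
qed

lemma lsum_add: "\<forall>t\<in>set L. g t \<in> lcar A \<Longrightarrow> \<forall>t\<in>set L. h t \<in> lcar A \<Longrightarrow>
   lsum_list A (map (\<lambda>t. ladd A (g t) (h t)) L) = ladd A (lsum_list A (map g L)) (lsum_list A (map h L))"
proof (induction L)
  case Nil then show ?case by (simp add: vs_zero_l[OF vs] vs_zero[OF vs])
next
  case (Cons a L)
  have "set (map g L) \<subseteq> lcar A" "set (map h L) \<subseteq> lcar A" using Cons.prems by auto
  then have c: "lsum_list A (map g L) \<in> lcar A" "lsum_list A (map h L) \<in> lcar A"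
    using lsum_closed by auto
  have ga: "g a \<in> lcar A" "h a \<in> lcar A" using Cons.prems by auto
  have "lsum_list A (map (\<lambda>t. ladd A (g t) (h t)) (a # L))
      = ladd A (ladd A (g a) (h a)) (ladd A (lsum_list A (map g L)) (lsum_list A (map h L)))"
    using Cons by simp
  also have "\<dots> = ladd A (ladd A (g a) (lsum_list A (map g L))) (ladd A (h a) (lsum_list A (map h L)))"
    by (rule vs_swap4[OF vs]) (use c ga in auto)
  finally show ?case by simp
qed

lemma lsum_smult: "\<forall>t\<in>set L. g t \<in> lcar A \<Longrightarrow>
   lsum_list A (map (\<lambda>t. lsmult A c (g t)) L) = lsmult A c (lsum_list A (map g L))"
proof (induction L)
  case Nil then show ?case by (simp add: vs_smult_zero[OF vs])
next
  case (Cons a L)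
  have "set (map g L) \<subseteq> lcar A" using Cons.prems by auto
  then show ?case using Cons by (simp add: vs_dist1[OF vs] lsum_closed)
qed

lemma lsum_perm_map:
  shows "\<forall>t\<in>set L. g t \<in> lcar A \<Longrightarrow> distinct L \<Longrightarrow> distinct L' \<Longrightarrow> set L = set L' \<Longrightarrow>
   lsum_list A (map g L) = lsum_list A (map g L')"
proof (induction L arbitrary: L')
  case Nil then show ?case by simp
next
  case (Cons x L)
  have "x \<in> set L'" using Cons.prems by auto
  then obtain y1 y2 where ys: "L' = y1 @ x # y2" by (metis split_list)
  have sy: "set (map g L') \<subseteq> lcar A" using Cons.prems by auto
  have "lsum_list A (map g L) = lsum_list A (map g (y1 @ y2))"
    by (rule Cons.IH) (use Cons.prems ys in auto)
  then show ?case using lsum_mid[of "map g y1" "g x" "map g y2"] sy ys by simp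
qed

end

section \<open>Bilinear algebras, Leibniz algebras and homomorphisms\<close>

abbreviation lsymbr :: "('k, 'a) lalg \<Rightarrow> 'a \<Rightarrow> 'a \<Rightarrow> 'a" where
  "lsymbr A x y \<equiv> ladd A (lbr A x y) (lbr A y x)"

abbreviation leib_defect :: "('k::field, 'a) lalg \<Rightarrow> 'a \<Rightarrow> 'a \<Rightarrow> 'a \<Rightarrow> 'a" where
  "leib_defect A x y z \<equiv> ldiff A (lbr A x (lbr A y z)) (ldiff A (lbr A (lbr A x y) z) (lbr A (lbr A x z) y))"

definition bilinear_alg :: "('k::field, 'a) lalg \<Rightarrow> bool" where
  "bilinear_alg A \<longleftrightarrow> vspace A \<and>
     (\<forall>x\<in>lcar A. \<forall>y\<in>lcar A. lbr A x y \<in> lcar A) \<and>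
     (\<forall>x\<in>lcar A. \<forall>y\<in>lcar A. \<forall>z\<in>lcar A. lbr A (ladd A x y) z = ladd A (lbr A x z) (lbr A y z)) \<and>
     (\<forall>x\<in>lcar A. \<forall>y\<in>lcar A. \<forall>z\<in>lcar A. lbr A x (ladd A y z) = ladd A (lbr A x y) (lbr A x z)) \<and>
     (\<forall>c. \<forall>x\<in>lcar A. \<forall>y\<in>lcar A. lbr A (lsmult A c x) y = lsmult A c (lbr A x y)) \<and>
     (\<forall>c. \<forall>x\<in>lcar A. \<forall>y\<in>lcar A. lbr A x (lsmult A c y) = lsmult A c (lbr A x y))"

lemma leibniz_bilinear_alg: "leibniz A \<Longrightarrow> bilinear_alg A"
  unfolding leibniz_def bilinear_alg_def by blast

lemma leibniz_identity:
  "leibniz A \<Longrightarrow> x \<in> lcar A \<Longrightarrow> y \<in> lcar A \<Longrightarrow> z \<in> lcar A \<Longrightarrow>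
   lbr A x (lbr A y z) = ldiff A (lbr A (lbr A x y) z) (lbr A (lbr A x z) y)"
  unfolding leibniz_def by blast

lemma ZLie_car: "z \<in> ZLie A \<Longrightarrow> z \<in> lcar A"
  unfolding ZLie_def by blast

context
  fixes A :: "('k::field, 'a) lalg"
  assumes bl: "bilinear_alg A"
begin

lemma
  shows bl_vspace: "vspace A"
    and bl_br: "x \<in> lcar A \<Longrightarrow> y \<in> lcar A \<Longrightarrow> lbr A x y \<in> lcar A"
    and bl_addl: "x \<in> lcar A \<Longrightarrow> y \<in> lcar A \<Longrightarrow> z \<in> lcar A \<Longrightarrow>
      lbr A (ladd A x y) z = ladd A (lbr A x z) (lbr A y z)"
    and bl_addr: "x \<in> lcar A \<Longrightarrow> y \<in> lcar A \<Longrightarrow> z \<in> lcar A \<Longrightarrow>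
      lbr A x (ladd A y z) = ladd A (lbr A x y) (lbr A x z)"
    and bl_smultl: "x \<in> lcar A \<Longrightarrow> y \<in> lcar A \<Longrightarrow> lbr A (lsmult A c x) y = lsmult A c (lbr A x y)"
    and bl_smultr: "x \<in> lcar A \<Longrightarrow> y \<in> lcar A \<Longrightarrow> lbr A x (lsmult A c y) = lsmult A c (lbr A x y)"
  using bl unfolding bilinear_alg_def by auto

lemma bl_zero_l: "x \<in> lcar A \<Longrightarrow> lbr A (lzero A) x = lzero A"
  using bl_smultl[OF vs_zero[OF bl_vspace], of x 0] vs_smult_0[OF bl_vspace] vs_zero[OF bl_vspace]
  by (simp add: bl_br)

lemma bl_zero_r: "x \<in> lcar A \<Longrightarrow> lbr A x (lzero A) = lzero A"
  using bl_smultr[OF _ vs_zero[OF bl_vspace], of x 0] vs_smult_0[OF bl_vspace] vs_zero[OF bl_vspace]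
  by (simp add: bl_br)

lemma bl_ldiff_l:
  "x \<in> lcar A \<Longrightarrow> y \<in> lcar A \<Longrightarrow> z \<in> lcar A \<Longrightarrow>
   lbr A (ldiff A x y) z = ldiff A (lbr A x z) (lbr A y z)"
  by (simp add: bl_addl bl_smultl vs_smult[OF bl_vspace])

lemma bl_ldiff_r:
  "x \<in> lcar A \<Longrightarrow> y \<in> lcar A \<Longrightarrow> z \<in> lcar A \<Longrightarrow>
   lbr A x (ldiff A y z) = ldiff A (lbr A x y) (lbr A x z)"
  by (simp add: bl_addr bl_smultr vs_smult[OF bl_vspace])

lemma ZLie_add:
  assumes a: "a \<in> ZLie A" and b: "b \<in> ZLie A"
  shows "ladd A a b \<in> ZLie A"
  unfolding ZLie_def
proof (intro CollectI conjI ballI)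
  have ac: "a \<in> lcar A" "b \<in> lcar A" using ZLie_car[OF a] ZLie_car[OF b] by auto
  note vs = bl_vspace
  show "ladd A a b \<in> lcar A" using ac by (rule vs_add[OF vs])
  fix x assume x: "x \<in> lcar A"
  have "lsymbr A x (ladd A a b) = ladd A (ladd A (lbr A x a) (lbr A x b)) (ladd A (lbr A a x) (lbr A b x))"
    using ac x by (simp add: bl_addl bl_addr)
  also have "\<dots> = ladd A (lsymbr A x a) (lsymbr A x b)"
    by (rule vs_swap4[OF vs]) (use ac x in \<open>simp_all add: bl_br\<close>)
  also have "\<dots> = lzero A"
    using a b x unfolding ZLie_def by (simp add: vs_zero_l[OF vs] vs_zero[OF vs])
  finally show "lsymbr A x (ladd A a b) = lzero A" .
qed

lemma lsymbr_add_ZLie: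
  assumes a: "a \<in> lcar A" and w: "w \<in> lcar A" and d: "d \<in> ZLie A"
  shows "lsymbr A (ladd A a d) w = lsymbr A a w"
proof -
  note vs = bl_vspace
  have dc: "d \<in> lcar A" by (rule ZLie_car[OF d])
  have "lsymbr A w d = lzero A" using d w unfolding ZLie_def by blast
  then have dz: "lsymbr A d w = lzero A" using vs_comm[OF vs bl_br[OF w dc] bl_br[OF dc w]] by simp
  have c: "lbr A a w \<in> lcar A" "lbr A w a \<in> lcar A" "lbr A d w \<in> lcar A" "lbr A w d \<in> lcar A"
    using a w dc by (simp_all add: bl_br)
  have "lsymbr A (ladd A a d) w = ladd A (ladd A (lbr A a w) (lbr A d w)) (ladd A (lbr A w a) (lbr A w d))"
    unfolding bl_addl[OF a dc w] bl_addr[OF w a dc] ..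
  also have "\<dots> = ladd A (lsymbr A a w) (lsymbr A d w)"
    by (rule vs_swap4[OF vs c(1) c(3) c(2) c(4)])
  also have "\<dots> = lsymbr A a w" unfolding dz by (rule vs_zero_r[OF vs vs_add[OF vs c(1) c(2)]])
  finally show ?thesis .
qed

end

lemma lspan_car: "lspan A S \<subseteq> lcar A"
  unfolding lspan_def by blast

lemma lspan_gen: "x \<in> S \<Longrightarrow> x \<in> lcar A \<Longrightarrow> x \<in> lspan A S"
  unfolding lspan_def by blast

lemma lspan_min: "subspace A T \<Longrightarrow> S \<inter> lcar A \<subseteq> T \<Longrightarrow> lspan A S \<subseteq> T"
  unfolding lspan_def by blast

lemma subspace_lspan:
  fixes A :: "('k::field, 'a) lalg"
  assumes vs: "vspace A"
  shows "subspace A (lspan A S)"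
  unfolding subspace_def
proof (intro conjI ballI allI)
  show "lspan A S \<subseteq> lcar A" by (rule lspan_car)
  show "lzero A \<in> lspan A S"
    unfolding lspan_def subspace_def using vs_zero[OF vs] by blast
  show "ladd A x y \<in> lspan A S" if "x \<in> lspan A S" "y \<in> lspan A S" for x y
    using that vs_add[OF vs] unfolding lspan_def subspace_def by blast
  show "lsmult A c x \<in> lspan A S" if "x \<in> lspan A S" for x c
    using that vs_smult[OF vs] unfolding lspan_def subspace_def by blast
qed

lemma ideal_subspace: "ideal A I \<Longrightarrow> subspace A I"
  unfolding ideal_def by blast

lemma ideal_brl: "ideal A I \<Longrightarrow> i \<in> I \<Longrightarrow> x \<in> lcar A \<Longrightarrow> lbr A i x \<in> I"
  and ideal_brr: "ideal A I \<Longrightarrow> i \<in> I \<Longrightarrow> x \<in> lcar A \<Longrightarrow> lbr A x i \<in> I"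
  unfolding ideal_def by blast+

lemma ideal_gen_gen: "x \<in> S \<Longrightarrow> x \<in> lcar A \<Longrightarrow> x \<in> ideal_gen A S"
  unfolding ideal_gen_def by blast

lemma ideal_gen_min: "ideal A I \<Longrightarrow> S \<inter> lcar A \<subseteq> I \<Longrightarrow> ideal_gen A S \<subseteq> I"
  unfolding ideal_gen_def by blast

lemma ideal_ideal_gen:
  assumes "ideal A (lcar A)"
  shows "ideal A (ideal_gen A S)"
  unfolding ideal_def subspace_def
proof (intro conjI ballI allI)
  let ?F = "{I. ideal A I \<and> S \<inter> lcar A \<subseteq> I}"
  have gen: "ideal_gen A S = \<Inter>?F" unfolding ideal_gen_def using assms by blast
  show "ideal_gen A S \<subseteq> lcar A" unfolding ideal_gen_def by blast
  show "lzero A \<in> ideal_gen A S" unfolding gen ideal_def subspace_def by blast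
  show "ladd A x y \<in> ideal_gen A S" if "x \<in> ideal_gen A S" "y \<in> ideal_gen A S" for x y
    using that unfolding gen ideal_def subspace_def by blast
  show "lsmult A c x \<in> ideal_gen A S" if "x \<in> ideal_gen A S" for x c
    using that unfolding gen ideal_def subspace_def by blast
  show "lbr A x i \<in> ideal_gen A S" "lbr A i x \<in> ideal_gen A S"
    if "x \<in> lcar A" "i \<in> ideal_gen A S" for x i
    using that unfolding gen ideal_def by blast+
qed

lemma quot_br:
  fixes A :: "('k::field, 'a) lalg"
  assumes bl: "bilinear_alg A" and I: "ideal A I" and a: "a \<in> lcar A" and b: "b \<in> lcar A"
  shows "lbr (quot A I) (coset A I a) (coset A I b) = coset A I (lbr A a b)"
proof -
  note vs = bl_vspace[OF bl] and sub = ideal_subspace[OF I]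
  let ?a = "qrep A I (coset A I a)" and ?b = "qrep A I (coset A I b)"
  note qa = qrep_coset[OF a, of I] and qb = qrep_coset[OF b, of I]
  have da: "ldiff A ?a a \<in> I" and db: "ldiff A ?b b \<in> I"
    using coset_eq_iff[OF vs sub qa(1) a] coset_eq_iff[OF vs sub qb(1) b] qa(2) qb(2) by auto
  have "ldiff A (lbr A ?a ?b) (lbr A a b)
      = ladd A (lbr A (ldiff A ?a a) ?b) (lbr A a (ldiff A ?b b))"
    using qa(1) qb(1) a b
    by (simp add: bl_ldiff_l[OF bl] bl_ldiff_r[OF bl] vs_ldiff_trans[OF vs] bl_br[OF bl])
  also have "\<dots> \<in> I"
    by (rule subspace_add[OF sub ideal_brl[OF I da qb(1)] ideal_brr[OF I db a]])
  finally have "coset A I (lbr A ?a ?b) = coset A I (lbr A a b)"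
    using coset_eq_iff[OF vs sub bl_br[OF bl qa(1) qb(1)] bl_br[OF bl a b]] by blast
  then show ?thesis unfolding quot_def by simp
qed

lemma
  shows hom_car: "hom A B h \<Longrightarrow> x \<in> lcar A \<Longrightarrow> h x \<in> lcar B"
    and hom_add: "hom A B h \<Longrightarrow> x \<in> lcar A \<Longrightarrow> y \<in> lcar A \<Longrightarrow> h (ladd A x y) = ladd B (h x) (h y)"
    and hom_smult: "hom A B h \<Longrightarrow> x \<in> lcar A \<Longrightarrow> h (lsmult A c x) = lsmult B c (h x)"
    and hom_br: "hom A B h \<Longrightarrow> x \<in> lcar A \<Longrightarrow> y \<in> lcar A \<Longrightarrow> h (lbr A x y) = lbr B (h x) (h y)"
  unfolding hom_def by blast+

lemma hom_lsymbr:
  "hom A B h \<Longrightarrow> bilinear_alg A \<Longrightarrow> x \<in> lcar A \<Longrightarrow> y \<in> lcar A \<Longrightarrow>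
   h (lsymbr A x y) = lsymbr B (h x) (h y)"
  by (simp add: hom_add hom_br bl_br)

lemma hom_zero:
  assumes vA: "vspace A" and vB: "vspace B" and h: "hom A B h"
  shows "h (lzero A) = lzero B"
proof -
  have z: "lzero A \<in> lcar A" by (rule vs_zero[OF vA])
  have "h (lzero A) = h (lsmult A 0 (lzero A))" by (simp only: vs_smult_0[OF vA z])
  also have "\<dots> = lzero B" by (simp only: hom_smult[OF h z] vs_smult_0[OF vB hom_car[OF h z]])
  finally show ?thesis .
qed

lemma hom_ldiff:
  "hom A B h \<Longrightarrow> vspace A \<Longrightarrow> x \<in> lcar A \<Longrightarrow> y \<in> lcar A \<Longrightarrow>
   h (ldiff A x y) = ldiff B (h x) (h y)"
  by (simp add: hom_add hom_smult vs_smult)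

lemma hom_comp: "hom A B g \<Longrightarrow> hom B C h \<Longrightarrow> hom A C (h \<circ> g)"
  unfolding hom_def by (auto simp: image_subset_iff)

lemma section_exists:
  assumes "\<psi> ` lcar P = lcar G"
  obtains s where "s ` lcar G \<subseteq> lcar P" "\<forall>x\<in>lcar G. \<psi> (s x) = x"
proof -
  have "\<forall>x\<in>lcar G. \<exists>y. y \<in> lcar P \<and> \<psi> y = x" using assms by force
  then obtain s where "\<forall>x\<in>lcar G. s x \<in> lcar P \<and> \<psi> (s x) = x" by metis
  then show ?thesis using that by blast
qed

lemma subspace_vimage:
  assumes vA: "vspace A" and vB: "vspace B" and h: "hom A B h" and T: "subspace B T"
  shows "subspace A {x \<in> lcar A. h x \<in> T}"
  unfolding subspace_def
  using hom_zero[OF vA vB h] subspace_zero[OF T] subspace_add[OF T] subspace_smult[OF T]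
  by (auto simp: vs_zero[OF vA] vs_add[OF vA] vs_smult[OF vA] hom_add[OF h] hom_smult[OF h])

lemma ideal_vimage:
  assumes bA: "bilinear_alg A" and bB: "bilinear_alg B" and h: "hom A B h" and J: "ideal B J"
  shows "ideal A {x \<in> lcar A. h x \<in> J}"
  unfolding ideal_def
  using subspace_vimage[OF bl_vspace[OF bA] bl_vspace[OF bB] h ideal_subspace[OF J]]
    ideal_brl[OF J] ideal_brr[OF J]
  by (auto simp: bl_br[OF bA] hom_br[OF h] hom_car[OF h])

lemma ideal_zero: "bilinear_alg A \<Longrightarrow> ideal A {lzero A}"
  unfolding ideal_def subspace_def
  by (simp add: bl_vspace vs_zero vs_zero_r vs_smult_zero bl_zero_l bl_zero_r)

lemma subspace_kerh:
  "vspace A \<Longrightarrow> vspace B \<Longrightarrow> hom A B h \<Longrightarrow> subspace A (kerh A B h)"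
  using subspace_vimage[of A B h "{lzero B}"]
  unfolding kerh_def subspace_def by (simp add: vs_zero vs_zero_r vs_smult_zero)

lemma coset_kerh_eq_iff:
  assumes vA: "vspace A" and vB: "vspace B" and h: "hom A B h"
    and a: "a \<in> lcar A" and b: "b \<in> lcar A"
  shows "coset A (kerh A B h) a = coset A (kerh A B h) b \<longleftrightarrow> h a = h b"
proof -
  have ab: "ldiff A a b \<in> lcar A" using a b by (simp add: vs_add[OF vA] vs_smult[OF vA])
  have ha: "h a \<in> lcar B" and hb: "h b \<in> lcar B" using a b hom_car[OF h] by auto
  have "ldiff A a b \<in> kerh A B h \<longleftrightarrow> ldiff B (h a) (h b) = lzero B"
    unfolding kerh_def using ab hom_ldiff[OF h vA a b] by simp
  also have "\<dots> \<longleftrightarrow> h a = h b" using vs_ldiff_eq_zero[OF vB ha hb] vs_neg[OF vB hb] by auto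
  finally show ?thesis using coset_eq_iff[OF vA subspace_kerh[OF vA vB h] a b] by simp
qed

lemma ldiff_kerh:
  assumes vA: "vspace A" and vB: "vspace B" and h: "hom A B h"
    and a: "a \<in> lcar A" and b: "b \<in> lcar A" and e: "h a = h b"
  shows "ldiff A a b \<in> kerh A B h"
  using coset_kerh_eq_iff[OF vA vB h a b] coset_eq_iff[OF vA subspace_kerh[OF vA vB h] a b] e by simp

context
  fixes P :: "('k::field, 'a) lalg" and G :: "('k, 'g) lalg" and \<psi> :: "'a \<Rightarrow> 'g"
  assumes bP: "bilinear_alg P" and vG: "vspace G" and h: "hom P G \<psi>" and k: "kerh P G \<psi> \<subseteq> ZLie P"
begin

lemma ZLie_of_kerh:
  assumes a: "a \<in> lcar P" and w: "w \<in> ZLie P" and e: "\<psi> a = \<psi> w"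
  shows "a \<in> ZLie P"
proof -
  note vP = bl_vspace[OF bP] and wc = ZLie_car[OF w]
  have "ldiff P a w \<in> ZLie P" using ldiff_kerh[OF vP vG h a wc e] k by blast
  then have "ladd P w (ldiff P a w) \<in> ZLie P" by (rule ZLie_add[OF bP w])
  then show ?thesis using vs_add_ldiff[OF vP a wc] by simp
qed

lemma lsymbr_kerh_eq:
  assumes y: "y \<in> lcar P" and y': "y' \<in> lcar P" and e: "\<psi> y = \<psi> y'" and w: "w \<in> lcar P"
  shows "lsymbr P y w = lsymbr P y' w"
proof -
  note vP = bl_vspace[OF bP]
  have "ldiff P y y' \<in> ZLie P" using ldiff_kerh[OF vP vG h y y' e] k by blast
  then have "lsymbr P (ladd P y' (ldiff P y y')) w = lsymbr P y' w"
    by (rule lsymbr_add_ZLie[OF bP y' w])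
  then show ?thesis using vs_add_ldiff[OF vP y y'] by simp
qed

end

context
  fixes A :: "('k::field, 'a) lalg" and B :: "('k, 'b) lalg" and \<phi> :: "'a \<Rightarrow> 'b"
    and I :: "'a set" and J :: "'b set"
  assumes vA: "vspace A" and vB: "vspace B" and h: "hom A B \<phi>"
    and I: "subspace A I" and J: "subspace B J" and IJ: "\<phi> ` I \<subseteq> J"
begin

lemma induced_coset: 
  assumes a: "a \<in> lcar A"
  shows "coset B J (\<phi> (qrep A I (coset A I a))) = coset B J (\<phi> a)"
proof -
  note q = qrep_coset[OF a, of I]
  have "ldiff A (qrep A I (coset A I a)) a \<in> I" using coset_eq_iff[OF vA I q(1) a] q(2) by blast
  then have "ldiff B (\<phi> (qrep A I (coset A I a))) (\<phi> a) \<in> J"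
    using IJ hom_ldiff[OF h vA q(1) a] by auto
  then show ?thesis using coset_eq_iff[OF vB J hom_car[OF h q(1)] hom_car[OF h a]] by blast
qed

end

lemma hom_induced:
  assumes bA: "bilinear_alg A" and bB: "bilinear_alg B" and h: "hom A B \<phi>"
    and I: "ideal A I" and J: "ideal B J" and IJ: "\<phi> ` I \<subseteq> J"
  shows "hom (quot A I) (quot B J) (\<lambda>X. coset B J (\<phi> (qrep A I X)))"
proof -
  note vA = bl_vspace[OF bA] and vB = bl_vspace[OF bB]
  note sI = ideal_subspace[OF I] and sJ = ideal_subspace[OF J]
  show ?thesis
    unfolding hom_def lcar_quot
    by (auto simp: induced_coset[OF vA vB h sI sJ IJ] quot_add[OF vA sI] quot_add[OF vB sJ]
        quot_smult[OF vA sI] quot_smult[OF vB sJ] quot_br[OF bA I] quot_br[OF bB J]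
        vs_add[OF vA] vs_smult[OF vA] bl_br[OF bA] hom_add[OF h] hom_smult[OF h] hom_br[OF h]
        hom_car[OF h])
qed

lemma induced_val:
  assumes vA: "vspace A" and vB: "vspace B" and h: "hom A B \<phi>"
    and I: "subspace A I" and I0: "\<phi> ` I \<subseteq> {lzero B}" and a: "a \<in> lcar A"
  shows "\<phi> (qrep A I (coset A I a)) = \<phi> a"
proof -
  note q = qrep_coset[OF a, of I]
  have "ldiff A (qrep A I (coset A I a)) a \<in> I" using coset_eq_iff[OF vA I q(1) a] q(2) by blast
  then have "ldiff B (\<phi> (qrep A I (coset A I a))) (\<phi> a) = lzero B"
    using I0 hom_ldiff[OF h vA q(1) a] by auto
  then show ?thesis using vs_ldiff_eq_zero[OF vB hom_car[OF h q(1)] hom_car[OF h a]] by blast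
qed

lemma hom_induced_val:
  assumes bA: "bilinear_alg A" and bB: "bilinear_alg B" and h: "hom A B \<phi>"
    and I: "ideal A I" and I0: "\<phi> ` I \<subseteq> {lzero B}"
  shows "hom (quot A I) B (\<lambda>X. \<phi> (qrep A I X))"
proof -
  note vA = bl_vspace[OF bA] and vB = bl_vspace[OF bB]
  note val = induced_val[OF vA vB h ideal_subspace[OF I] I0]
  show ?thesis
    unfolding hom_def lcar_quot
    by (auto simp: val quot_add[OF vA ideal_subspace[OF I]] quot_smult[OF vA ideal_subspace[OF I]]
        quot_br[OF bA I] vs_add[OF vA] vs_smult[OF vA] bl_br[OF bA]
        hom_add[OF h] hom_smult[OF h] hom_br[OF h] hom_car[OF h])
qed

context
  fixes G :: "('k::field, 'g) lalg" and P1 :: "('k, 'a) lalg" and P2 :: "('k, 'b) lalg"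
    and \<psi>1 :: "'a \<Rightarrow> 'g" and \<psi>2 :: "'b \<Rightarrow> 'g" and s :: "'g \<Rightarrow> 'b" and S1 :: "'a set" and S2 :: "'b set"
  assumes b1: "bilinear_alg P1" and b2: "bilinear_alg P2" and vG: "vspace G"
    and h1: "hom P1 G \<psi>1" and h2: "hom P2 G \<psi>2"
    and sc: "s ` lcar G \<subseteq> lcar P2" and inv: "\<forall>x\<in>lcar G. \<psi>2 (s x) = x"
    and S1: "S1 \<subseteq> lcar P1" and S2: "S2 \<subseteq> lcar P2" and eq: "\<psi>1 ` S1 = \<psi>2 ` S2"
begin

text \<open>The class of b is sent to the class of any \<psi>2-preimage of \<psi>1 b; s picks one.\<close>
definition kerquot_map :: "'a set \<Rightarrow> 'b set" where
  "kerquot_map X = coset P2 (kerh P2 G \<psi>2) (s (\<psi>1 (qrep P1 (kerh P1 G \<psi>1) X)))"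

lemma kerquot_map_coset:
  assumes b: "b \<in> lcar P1" and b': "b' \<in> lcar P2" "\<psi>2 b' = \<psi>1 b"
  shows "kerquot_map (coset P1 (kerh P1 G \<psi>1) b) = coset P2 (kerh P2 G \<psi>2) b'"
proof -
  note q = qrep_coset[OF b, of "kerh P1 G \<psi>1"]
  have "\<psi>1 (qrep P1 (kerh P1 G \<psi>1) (coset P1 (kerh P1 G \<psi>1) b)) = \<psi>1 b"
    using coset_kerh_eq_iff[OF bl_vspace[OF b1] vG h1 q(1) b] q(2) by blast
  moreover have "s (\<psi>1 b) \<in> lcar P2" "\<psi>2 (s (\<psi>1 b)) = \<psi>1 b"
    using sc inv hom_car[OF h1 b] by auto
  ultimately show ?thesis
    unfolding kerquot_map_def using coset_kerh_eq_iff[OF bl_vspace[OF b2] vG h2 _ b'(1)] b'(2) by simp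
qed

lemma kerquot_map_rep:
  assumes X: "X \<in> lcar (quot (restr P1 S1) (kerh P1 G \<psi>1))"
  shows "kerquot_map X \<in> lcar (quot (restr P2 S2) (kerh P2 G \<psi>2))"
    "\<psi>2 (qrep (restr P2 S2) (kerh P2 G \<psi>2) (kerquot_map X)) = \<psi>1 (qrep (restr P1 S1) (kerh P1 G \<psi>1) X)"
proof -
  let ?q1 = "qrep (restr P1 S1) (kerh P1 G \<psi>1)" and ?q2 = "qrep (restr P2 S2) (kerh P2 G \<psi>2)"
  note Q1 = qrep_restr[OF X]
  obtain z where z: "z \<in> S2" "\<psi>1 (?q1 X) = \<psi>2 z" using eq Q1(1) by blast
  have zc: "z \<in> lcar P2" using z(1) S2 by blast
  have hX: "kerquot_map X = coset P2 (kerh P2 G \<psi>2) z"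
    using kerquot_map_coset[OF _ zc z(2)[symmetric]] Q1 S1 by auto
  then show hXc: "kerquot_map X \<in> lcar (quot (restr P2 S2) (kerh P2 G \<psi>2))"
    unfolding quot_restr_ops using z(1) by blast
  note Q2 = qrep_restr[OF hXc]
  have "coset P2 (kerh P2 G \<psi>2) (?q2 (kerquot_map X)) = coset P2 (kerh P2 G \<psi>2) z"
    unfolding Q2(2) by (rule hX)
  then have "\<psi>2 (?q2 (kerquot_map X)) = \<psi>2 z"
    using coset_kerh_eq_iff[OF bl_vspace[OF b2] vG h2 _ zc] Q2(1) S2 by blast
  then show "\<psi>2 (?q2 (kerquot_map X)) = \<psi>1 (?q1 X)" using z(2) by simp
qed

lemma hom_kerquot_map:
  "hom (quot (restr P1 S1) (kerh P1 G \<psi>1)) (quot (restr P2 S2) (kerh P2 G \<psi>2)) kerquot_map"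
  unfolding hom_def
proof (intro conjI ballI allI)
  let ?Q1 = "quot (restr P1 S1) (kerh P1 G \<psi>1)"
  let ?q1 = "qrep (restr P1 S1) (kerh P1 G \<psi>1)" and ?q2 = "qrep (restr P2 S2) (kerh P2 G \<psi>2)"
  show "kerquot_map ` lcar ?Q1 \<subseteq> lcar (quot (restr P2 S2) (kerh P2 G \<psi>2))"
    using kerquot_map_rep(1) by blast
  fix x y c assume x: "x \<in> lcar ?Q1" and y: "y \<in> lcar ?Q1"
  have xy: "?q1 x \<in> lcar P1" "?q1 y \<in> lcar P1"
    "?q2 (kerquot_map x) \<in> lcar P2" "?q2 (kerquot_map y) \<in> lcar P2"
    using qrep_restr(1)[OF x] qrep_restr(1)[OF y] qrep_restr(1)[OF kerquot_map_rep(1)[OF x]]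
      qrep_restr(1)[OF kerquot_map_rep(1)[OF y]] S1 S2 by auto
  note \<psi> = kerquot_map_rep(2)[OF x] kerquot_map_rep(2)[OF y]
  show "kerquot_map (ladd ?Q1 x y) = ladd (quot (restr P2 S2) (kerh P2 G \<psi>2)) (kerquot_map x) (kerquot_map y)"
    unfolding quot_restr_ops using xy \<psi>
    by (intro kerquot_map_coset) (simp_all add: vs_add b1 b2 bl_vspace hom_add[OF h1] hom_add[OF h2])
  show "kerquot_map (lsmult ?Q1 c x) = lsmult (quot (restr P2 S2) (kerh P2 G \<psi>2)) c (kerquot_map x)"
    unfolding quot_restr_ops using xy \<psi>
    by (intro kerquot_map_coset) (simp_all add: vs_smult b1 b2 bl_vspace hom_smult[OF h1] hom_smult[OF h2])
  show "kerquot_map (lbr ?Q1 x y) = lbr (quot (restr P2 S2) (kerh P2 G \<psi>2)) (kerquot_map x) (kerquot_map y)"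
    unfolding quot_restr_ops using xy \<psi>
    by (intro kerquot_map_coset) (simp_all add: bl_br b1 b2 hom_br[OF h1] hom_br[OF h2])
qed

lemma bij_betw_kerquot_map:
  "bij_betw kerquot_map (lcar (quot (restr P1 S1) (kerh P1 G \<psi>1))) (lcar (quot (restr P2 S2) (kerh P2 G \<psi>2)))"
proof -
  let ?Q1 = "quot (restr P1 S1) (kerh P1 G \<psi>1)" and ?Q2 = "quot (restr P2 S2) (kerh P2 G \<psi>2)"
  let ?q1 = "qrep (restr P1 S1) (kerh P1 G \<psi>1)" and ?q2 = "qrep (restr P2 S2) (kerh P2 G \<psi>2)"
  have "inj_on kerquot_map (lcar ?Q1)"
  proof (rule inj_onI)
    fix x y assume x: "x \<in> lcar ?Q1" and y: "y \<in> lcar ?Q1" and e: "kerquot_map x = kerquot_map y"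
    have "\<psi>1 (?q1 x) = \<psi>1 (?q1 y)" using kerquot_map_rep(2)[OF x] kerquot_map_rep(2)[OF y] e by simp
    then have "coset P1 (kerh P1 G \<psi>1) (?q1 x) = coset P1 (kerh P1 G \<psi>1) (?q1 y)"
      using coset_kerh_eq_iff[OF bl_vspace[OF b1] vG h1] qrep_restr(1)[OF x] qrep_restr(1)[OF y] S1 by blast
    then show "x = y" unfolding qrep_restr(2)[OF x] qrep_restr(2)[OF y] .
  qed
  moreover have "lcar ?Q2 \<subseteq> kerquot_map ` lcar ?Q1"
  proof
    fix W assume W: "W \<in> lcar ?Q2"
    obtain z where z: "z \<in> S1" "\<psi>2 (?q2 W) = \<psi>1 z" using eq qrep_restr(1)[OF W] by force
    have "coset P1 (kerh P1 G \<psi>1) z \<in> lcar ?Q1" unfolding quot_restr_ops using z(1) by blast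
    moreover have "kerquot_map (coset P1 (kerh P1 G \<psi>1) z) = W"
      using kerquot_map_coset[of z "?q2 W"] qrep_restr[OF W] z S1 S2 by auto
    ultimately show "W \<in> kerquot_map ` lcar ?Q1" by force
  qed
  ultimately show ?thesis
    unfolding bij_betw_def using hom_kerquot_map unfolding hom_def by blast
qed

end

lemma isomorphic_quot_restr_kerh:
  fixes G :: "('k::field, 'g) lalg" and P1 :: "('k, 'a) lalg" and P2 :: "('k, 'b) lalg"
  assumes b1: "bilinear_alg P1" and b2: "bilinear_alg P2" and vG: "vspace G"
    and h1: "hom P1 G \<psi>1" and h2: "hom P2 G \<psi>2" and sur2: "\<psi>2 ` lcar P2 = lcar G"
    and S1: "S1 \<subseteq> lcar P1" and S2: "S2 \<subseteq> lcar P2" and eq: "\<psi>1 ` S1 = \<psi>2 ` S2"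
  shows "isomorphic (quot (restr P1 S1) (kerh P1 G \<psi>1)) (quot (restr P2 S2) (kerh P2 G \<psi>2))"
proof -
  obtain s where sc: "s ` lcar G \<subseteq> lcar P2" and inv: "\<forall>x\<in>lcar G. \<psi>2 (s x) = x"
    using section_exists[OF sur2] by blast
  note assms' = b1 b2 vG h1 h2 sc inv S1 S2 eq
  show ?thesis
    unfolding isomorphic_def iso_def
    using hom_kerquot_map[OF assms'] bij_betw_kerquot_map[OF assms'] by blast
qed

section \<open>The free magma algebra\<close>

definition madd :: "('x \<Rightarrow> 'k::field) \<Rightarrow> ('x \<Rightarrow> 'k) \<Rightarrow> ('x \<Rightarrow> 'k)" where
  "madd f g = (\<lambda>t. f t + g t)"
definition msm :: "'k::field \<Rightarrow> ('x \<Rightarrow> 'k) \<Rightarrow> ('x \<Rightarrow> 'k)" where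
  "msm c f = (\<lambda>t. c * f t)"
definition mbr :: "('x tr \<Rightarrow> 'k::field) \<Rightarrow> ('x tr \<Rightarrow> 'k) \<Rightarrow> ('x tr \<Rightarrow> 'k)" where
  "mbr f g = (\<lambda>t. case t of Lf x \<Rightarrow> 0 | Nd l r \<Rightarrow> f l * g r)"
definition mmon :: "'k::field \<Rightarrow> 'x \<Rightarrow> ('x \<Rightarrow> 'k)" where
  "mmon c t = (\<lambda>s. if s = t then c else 0)"
definition supp :: "('x \<Rightarrow> 'k::field) \<Rightarrow> 'x set" where
  "supp f = {t. f t \<noteq> 0}"

lemma mag_simps[simp]:
  "lzero (mag X) = (\<lambda>t. 0)" "ladd (mag X) = madd" "lsmult (mag X) = msm" "lbr (mag X) = mbr"
  unfolding mag_def madd_def msm_def mbr_def by (auto simp: fun_eq_iff)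

lemma mag_car: "f \<in> lcar (mag X) \<longleftrightarrow> finite (supp f) \<and> (\<forall>t\<in>supp f. set_tr t \<subseteq> X)"
  unfolding mag_def supp_def by auto

lemma supp_madd: "supp (madd f g) \<subseteq> supp f \<union> supp g"
  unfolding supp_def madd_def by auto
lemma supp_msm: "supp (msm c f) \<subseteq> supp f"
  unfolding supp_def msm_def by auto
lemma supp_mbr: "supp (mbr f g) \<subseteq> (\<lambda>(l, r). Nd l r) ` (supp f \<times> supp g)"
proof
  fix t assume "t \<in> supp (mbr f g)"
  then show "t \<in> (\<lambda>(l, r). Nd l r) ` (supp f \<times> supp g)"
    unfolding supp_def mbr_def by (cases t) auto
qed
lemma supp_mmon: "supp (mmon c t) \<subseteq> {t}" unfolding supp_def mmon_def by auto
lemma supp_zero: "supp (\<lambda>t. 0) = {}" unfolding supp_def by auto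

lemma mag_zero: "(\<lambda>t. 0) \<in> lcar (mag X)" unfolding mag_car supp_zero by auto
lemma mag_add: "f \<in> lcar (mag X) \<Longrightarrow> g \<in> lcar (mag X) \<Longrightarrow> madd f g \<in> lcar (mag X)"
  unfolding mag_car using supp_madd[of f g] by (meson UnE finite_UnI finite_subset subsetD)
lemma mag_smult: "f \<in> lcar (mag X) \<Longrightarrow> msm c f \<in> lcar (mag X)"
  unfolding mag_car using supp_msm[of c f] by (meson finite_subset subsetD)
lemma mag_br: "f \<in> lcar (mag X) \<Longrightarrow> g \<in> lcar (mag X) \<Longrightarrow> mbr f g \<in> lcar (mag X)"
proof -
  assume f: "f \<in> lcar (mag X)" and g: "g \<in> lcar (mag X)"
  have "finite ((\<lambda>(l, r). Nd l r) ` (supp f \<times> supp g))" using f g unfolding mag_car by auto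
  then have "finite (supp (mbr f g))" using supp_mbr finite_subset by blast
  moreover have "\<forall>t\<in>supp (mbr f g). set_tr t \<subseteq> X"
    using supp_mbr[of f g] f g unfolding mag_car by fastforce
  ultimately show ?thesis unfolding mag_car by blast
qed
lemma mag_mmon: "set_tr t \<subseteq> X \<Longrightarrow> mmon c t \<in> lcar (mag X)"
proof -
  assume a: "set_tr t \<subseteq> X"
  have s: "supp (mmon c t) \<subseteq> {t}" by (rule supp_mmon)
  then have "finite (supp (mmon c t))" using finite_subset by blast
  moreover have "\<forall>s\<in>supp (mmon c t). set_tr s \<subseteq> X" using s a by auto
  ultimately show ?thesis unfolding mag_car by blast
qed

lemma mbr_addl: "mbr (madd f g) h = madd (mbr f h) (mbr g h)"
  unfolding mbr_def madd_def by (auto simp: fun_eq_iff distrib_right split: tr.split)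
lemma mbr_addr: "mbr h (madd f g) = madd (mbr h f) (mbr h g)"
  unfolding mbr_def madd_def by (auto simp: fun_eq_iff distrib_left split: tr.split)
lemma mbr_zero: "mbr (\<lambda>t. 0) f = (\<lambda>t. 0)" "mbr f (\<lambda>t. 0) = (\<lambda>t. 0)"
  unfolding mbr_def by (auto simp: fun_eq_iff split: tr.split)
lemma mbr_mmon: "mbr (mmon c a) (mmon d b) = mmon (c * d) (Nd a b)"
  unfolding mbr_def mmon_def by (auto simp: fun_eq_iff split: tr.split)

lemma bilinear_alg_mag: "bilinear_alg (mag X)"
  unfolding bilinear_alg_def vspace_def mag_simps
  by (simp add: mag_zero mag_add mag_smult mag_br,
      auto simp: madd_def msm_def mbr_def fun_eq_iff algebra_simps split: tr.split)

lemma mag_additive_ext: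
  fixes f :: "'x tr \<Rightarrow> 'k::field" and \<Phi> \<Psi> :: "('x tr \<Rightarrow> 'k) \<Rightarrow> 'b"
  assumes f: "f \<in> lcar (mag X)"
    and z: "\<Phi> (\<lambda>t. 0) = \<Psi> (\<lambda>t. 0)"
    and aP: "\<And>f g. f \<in> lcar (mag X) \<Longrightarrow> g \<in> lcar (mag X) \<Longrightarrow> \<Phi> (madd f g) = add (\<Phi> f) (\<Phi> g)"
    and aQ: "\<And>f g. f \<in> lcar (mag X) \<Longrightarrow> g \<in> lcar (mag X) \<Longrightarrow> \<Psi> (madd f g) = add (\<Psi> f) (\<Psi> g)"
    and d: "\<And>c t. set_tr t \<subseteq> X \<Longrightarrow> c \<noteq> 0 \<Longrightarrow> \<Phi> (mmon c t) = \<Psi> (mmon c t)"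
  shows "\<Phi> f = \<Psi> f"
proof -
  have main: "\<forall>f::'x tr \<Rightarrow> 'k. f \<in> lcar (mag X) \<longrightarrow> supp f = S \<longrightarrow> \<Phi> f = \<Psi> f" if "finite S" for S
    using that
  proof (induction S rule: finite_induct)
    case empty
    show ?case
    proof (intro allI impI)
      fix f :: "'x tr \<Rightarrow> 'k" assume "f \<in> lcar (mag X)" "supp f = {}"
      then have "f = (\<lambda>t. 0)" unfolding supp_def by auto
      then show "\<Phi> f = \<Psi> f" using z by simp
    qed
  next
    case (insert a S)
    show ?case
    proof (intro allI impI)
      fix f :: "'x tr \<Rightarrow> 'k" assume f: "f \<in> lcar (mag X)" and sf: "supp f = insert a S"
      define g where "g = f(a := 0)"
      have sg: "supp g = S" using sf insert(2) unfolding g_def supp_def by auto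
      have fa: "f a \<noteq> 0" using sf unfolding supp_def by auto
      have at: "set_tr a \<subseteq> X" using f sf unfolding mag_car by auto
      have gc: "g \<in> lcar (mag X)" using f sg sf unfolding mag_car by auto
      have cc: "mmon (f a) a \<in> lcar (mag X)" using mag_mmon[OF at] .
      have fe: "f = madd g (mmon (f a) a)" unfolding g_def madd_def mmon_def by auto
      have "\<Phi> f = add (\<Phi> g) (\<Phi> (mmon (f a) a))" using aP[OF gc cc] fe by simp
      also have "\<dots> = add (\<Psi> g) (\<Psi> (mmon (f a) a))" using insert(3) gc sg d[OF at fa] by simp
      also have "\<dots> = \<Psi> f" using aQ[OF gc cc] fe by simp
      finally show "\<Phi> f = \<Psi> f" .
    qed
  qed
  have "finite (supp f)" using f unfolding mag_car by blast
  then show ?thesis using main f by blast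
qed

lemma tr_ev_car: "bilinear_alg A \<Longrightarrow> set_tr t \<subseteq> lcar A \<Longrightarrow> tr_ev A t \<in> lcar A"
  by (induction t) (auto simp: bl_br)

lemma mag_ev_list:
  assumes bl: "bilinear_alg A" and f: "f \<in> lcar (mag (lcar A))"
    and L: "distinct L" "supp f \<subseteq> set L" "\<forall>t\<in>set L. set_tr t \<subseteq> lcar A"
  shows "mag_ev A f = lsum_list A (map (\<lambda>t. lsmult A (f t) (tr_ev A t)) L)"
proof -
  have vs: "vspace A" by (rule bl_vspace[OF bl])
  define g where "g = (\<lambda>t. lsmult A (f t) (tr_ev A t))"
  have fin: "finite (supp f)" using f unfolding mag_car by blast
  obtain L0 where L0: "distinct L0" "set L0 = supp f" using finite_distinct_list[OF fin] by blast
  let ?L0 = "SOME xs. distinct xs \<and> set xs = {t. f t \<noteq> 0}"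
  have S: "distinct ?L0 \<and> set ?L0 = supp f"
    by (rule someI[of "\<lambda>xs. distinct xs \<and> set xs = {t. f t \<noteq> 0}" L0, THEN conjE])
       (use L0 in \<open>auto simp: supp_def\<close>)
  have gc: "\<forall>t\<in>set L. g t \<in> lcar A" unfolding g_def using L(3) tr_ev_car[OF bl] vs_smult[OF vs] by blast
  have "lsum_list A (map g L) = lsum_list A (map g (filter (\<lambda>t. f t \<noteq> 0) L))"
    by (rule lsum_filter[OF vs gc]) (auto simp: g_def vs_smult_0[OF vs] tr_ev_car[OF bl] L(3))
  also have "\<dots> = lsum_list A (map g ?L0)"
  proof (rule lsum_perm_map[OF vs])
    show "\<forall>t\<in>set (filter (\<lambda>t. f t \<noteq> 0) L). g t \<in> lcar A" using gc by auto
    show "distinct (filter (\<lambda>t. f t \<noteq> 0) L)" using L(1) by simp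
    show "distinct ?L0" using S by blast
    show "set (filter (\<lambda>t. f t \<noteq> 0) L) = set ?L0" using S L(2) unfolding supp_def by auto
  qed
  finally show ?thesis unfolding mag_ev_def g_def by simp
qed

lemma mag_ev_car:
  assumes bl: "bilinear_alg A" and f: "f \<in> lcar (mag (lcar A))"
  shows "mag_ev A f \<in> lcar A"
proof -
  have fin: "finite (supp f)" using f unfolding mag_car by blast
  obtain L where L: "distinct L" "set L = supp f" using finite_distinct_list[OF fin] by blast
  have Lt: "\<forall>t\<in>set L. set_tr t \<subseteq> lcar A" using L f unfolding mag_car by blast
  have "\<forall>t\<in>set L. lsmult A (f t) (tr_ev A t) \<in> lcar A"
    using Lt tr_ev_car[OF bl] vs_smult[OF bl_vspace[OF bl]] by blast
  then have "lsum_list A (map (\<lambda>t. lsmult A (f t) (tr_ev A t)) L) \<in> lcar A"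
    by (intro lsum_closed[OF bl_vspace[OF bl]]) auto
  then show ?thesis using mag_ev_list[OF bl f L(1) _ Lt] L by simp
qed

lemma mag_ev_zero: "bilinear_alg A \<Longrightarrow> mag_ev A (\<lambda>t. 0) = lzero A"
  using mag_ev_list[of A "\<lambda>t. 0" "[]"] mag_zero[of "lcar A"] supp_zero by simp

lemma mag_ev_add:
  assumes bl: "bilinear_alg A" and f: "f \<in> lcar (mag (lcar A))" and g: "g \<in> lcar (mag (lcar A))"
  shows "mag_ev A (madd f g) = ladd A (mag_ev A f) (mag_ev A g)"
proof -
  have vs: "vspace A" by (rule bl_vspace[OF bl])
  have fin: "finite (supp f \<union> supp g)" using f g unfolding mag_car by blast
  obtain L where L: "distinct L" "set L = supp f \<union> supp g" using finite_distinct_list[OF fin] by blast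
  have Lt: "\<forall>t\<in>set L. set_tr t \<subseteq> lcar A" using L f g unfolding mag_car by blast
  have ev: "\<forall>t\<in>set L. tr_ev A t \<in> lcar A" using Lt tr_ev_car[OF bl] by blast
  have "mag_ev A (madd f g) = lsum_list A (map (\<lambda>t. lsmult A (madd f g t) (tr_ev A t)) L)"
    using mag_ev_list[OF bl mag_add[OF f g] L(1) _ Lt] supp_madd[of f g] L(2) by simp
  also have "\<dots> = lsum_list A (map (\<lambda>t. ladd A (lsmult A (f t) (tr_ev A t)) (lsmult A (g t) (tr_ev A t))) L)"
    using ev by (intro arg_cong[where f="lsum_list A"] map_cong) (auto simp: madd_def vs_dist2[OF vs])
  also have "\<dots> = ladd A (lsum_list A (map (\<lambda>t. lsmult A (f t) (tr_ev A t)) L))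
                         (lsum_list A (map (\<lambda>t. lsmult A (g t) (tr_ev A t)) L))"
    by (rule lsum_add[OF vs]) (use ev vs_smult[OF vs] in auto)
  also have "\<dots> = ladd A (mag_ev A f) (mag_ev A g)"
    using mag_ev_list[OF bl f L(1) _ Lt] mag_ev_list[OF bl g L(1) _ Lt] L(2) by simp
  finally show ?thesis .
qed

lemma mag_ev_smult:
  assumes bl: "bilinear_alg A" and f: "f \<in> lcar (mag (lcar A))"
  shows "mag_ev A (msm c f) = lsmult A c (mag_ev A f)"
proof -
  have vs: "vspace A" by (rule bl_vspace[OF bl])
  have fin: "finite (supp f)" using f unfolding mag_car by blast
  obtain L where L: "distinct L" "set L = supp f" using finite_distinct_list[OF fin] by blast
  have Lt: "\<forall>t\<in>set L. set_tr t \<subseteq> lcar A" using L f unfolding mag_car by blast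
  have ev: "\<forall>t\<in>set L. tr_ev A t \<in> lcar A" using Lt tr_ev_car[OF bl] by blast
  have "mag_ev A (msm c f) = lsum_list A (map (\<lambda>t. lsmult A (msm c f t) (tr_ev A t)) L)"
    using mag_ev_list[OF bl mag_smult[OF f] L(1) _ Lt] supp_msm[of c f] L(2) by simp
  also have "\<dots> = lsum_list A (map (\<lambda>t. lsmult A c (lsmult A (f t) (tr_ev A t))) L)"
    using ev by (intro arg_cong[where f="lsum_list A"] map_cong) (auto simp: msm_def vs_sassoc[OF vs])
  also have "\<dots> = lsmult A c (lsum_list A (map (\<lambda>t. lsmult A (f t) (tr_ev A t)) L))"
    by (rule lsum_smult[OF vs]) (use ev vs_smult[OF vs] in auto)
  also have "\<dots> = lsmult A c (mag_ev A f)"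
    using mag_ev_list[OF bl f L(1) _ Lt] L(2) by simp
  finally show ?thesis .
qed

lemma mag_ev_mmon:
  assumes bl: "bilinear_alg A" and t: "set_tr t \<subseteq> lcar A"
  shows "mag_ev A (mmon c t) = lsmult A c (tr_ev A t)"
proof -
  have vs: "vspace A" by (rule bl_vspace[OF bl])
  have "mag_ev A (mmon c t) = lsum_list A (map (\<lambda>s. lsmult A (mmon c t s) (tr_ev A s)) [t])"
    using mag_ev_list[OF bl mag_mmon[OF t] _ _, of "[t]"] supp_mmon[of c t] t by simp
  also have "\<dots> = lsmult A c (tr_ev A t)"
    using vs_zero_r[OF vs vs_smult[OF vs tr_ev_car[OF bl t]]] by (simp add: mmon_def)
  finally show ?thesis .
qed

lemma mag_ev_br:
  assumes bl: "bilinear_alg A" and f: "f \<in> lcar (mag (lcar A))" and g: "g \<in> lcar (mag (lcar A))"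
  shows "mag_ev A (mbr f g) = lbr A (mag_ev A f) (mag_ev A g)"
proof -
  have vs: "vspace A" by (rule bl_vspace[OF bl])
  note car = mag_ev_car[OF bl]
  have inner: "mag_ev A (mbr (mmon c a) g) = lbr A (mag_ev A (mmon c a)) (mag_ev A g)"
    if a: "set_tr a \<subseteq> lcar A" and g: "g \<in> lcar (mag (lcar A))" for c a g
  proof (rule mag_additive_ext[OF g, where add="ladd A"])
    have ca: "mmon c a \<in> lcar (mag (lcar A))" by (rule mag_mmon[OF a])
    show "mag_ev A (mbr (mmon c a) (\<lambda>t. 0)) = lbr A (mag_ev A (mmon c a)) (mag_ev A (\<lambda>t. 0))"
      by (simp add: mbr_zero mag_ev_zero[OF bl] bl_zero_r[OF bl] car[OF ca])
    show "mag_ev A (mbr (mmon c a) (madd f1 f2)) = ladd A (mag_ev A (mbr (mmon c a) f1)) (mag_ev A (mbr (mmon c a) f2))"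
      if "f1 \<in> lcar (mag (lcar A))" "f2 \<in> lcar (mag (lcar A))" for f1 f2
      using that by (simp add: mbr_addr mag_ev_add[OF bl] mag_br ca)
    show "lbr A (mag_ev A (mmon c a)) (mag_ev A (madd f1 f2)) = ladd A (lbr A (mag_ev A (mmon c a)) (mag_ev A f1)) (lbr A (mag_ev A (mmon c a)) (mag_ev A f2))"
      if "f1 \<in> lcar (mag (lcar A))" "f2 \<in> lcar (mag (lcar A))" for f1 f2
      using that by (simp add: mag_ev_add[OF bl] bl_addr[OF bl] car ca)
    show "mag_ev A (mbr (mmon c a) (mmon d b)) = lbr A (mag_ev A (mmon c a)) (mag_ev A (mmon d b))"
      if b: "set_tr b \<subseteq> lcar A" "d \<noteq> 0" for d b
    proof -
      have ea: "tr_ev A a \<in> lcar A" and eb: "tr_ev A b \<in> lcar A" using tr_ev_car[OF bl] a b by auto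
      have nd: "set_tr (Nd a b) \<subseteq> lcar A" using a b by simp
      have "mag_ev A (mbr (mmon c a) (mmon d b)) = lsmult A (c * d) (lbr A (tr_ev A a) (tr_ev A b))"
        unfolding mbr_mmon mag_ev_mmon[OF bl nd] by simp
      also have "\<dots> = lsmult A c (lsmult A d (lbr A (tr_ev A a) (tr_ev A b)))"
        using vs_sassoc[OF vs bl_br[OF bl ea eb]] by simp
      also have "\<dots> = lbr A (lsmult A c (tr_ev A a)) (lsmult A d (tr_ev A b))"
        using bl_smultl[OF bl ea vs_smult[OF vs eb]] bl_smultr[OF bl ea eb] by simp
      finally show ?thesis unfolding mag_ev_mmon[OF bl a] mag_ev_mmon[OF bl b(1)] .
    qed
  qed
  show ?thesis
  proof (rule mag_additive_ext[OF f, where add="ladd A" and \<Phi>="\<lambda>f. mag_ev A (mbr f g)" and \<Psi>="\<lambda>f. lbr A (mag_ev A f) (mag_ev A g)", simplified])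
    show "mag_ev A (mbr (\<lambda>t. 0) g) = lbr A (mag_ev A (\<lambda>t. 0)) (mag_ev A g)"
      by (simp add: mbr_zero mag_ev_zero[OF bl] bl_zero_l[OF bl] car[OF g])
    show "mag_ev A (mbr (madd f1 f2) g) = ladd A (mag_ev A (mbr f1 g)) (mag_ev A (mbr f2 g))"
      if "f1 \<in> lcar (mag (lcar A))" "f2 \<in> lcar (mag (lcar A))" for f1 f2
      using that g by (simp add: mbr_addl mag_ev_add[OF bl] mag_br)
    show "lbr A (mag_ev A (madd f1 f2)) (mag_ev A g) = ladd A (lbr A (mag_ev A f1) (mag_ev A g)) (lbr A (mag_ev A f2) (mag_ev A g))"
      if "f1 \<in> lcar (mag (lcar A))" "f2 \<in> lcar (mag (lcar A))" for f1 f2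
      using that g by (simp add: mag_ev_add[OF bl] bl_addl[OF bl] car)
    show "mag_ev A (mbr (mmon c a) g) = lbr A (mag_ev A (mmon c a)) (mag_ev A g)"
      if "set_tr a \<subseteq> lcar A" "c \<noteq> 0" for c a
      using inner[OF that(1) g] .
  qed
qed

lemma sum_nonzero_eq:
  assumes "finite T" "{s. f s \<noteq> 0 \<and> P s} \<subseteq> T" "T \<subseteq> {s. P s}"
  shows "sum f {s. f s \<noteq> (0::'k::field) \<and> P s} = sum f T"
  by (rule sum.mono_neutral_left) (use assms in auto)

lemma magmap_apply: "magmap h f t = sum f {s. f s \<noteq> 0 \<and> map_tr h s = t}"
  unfolding magmap_def by simp

lemma magmap_add:
  assumes "finite (supp f)" "finite (supp g)"
  shows "magmap h (madd f g) = madd (magmap h f) (magmap h g)"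
proof
  fix t
  let ?T = "{s \<in> supp f \<union> supp g. map_tr h s = t}"
  have fin: "finite ?T" using assms by auto
  have "magmap h (madd f g) t = sum (madd f g) ?T"
    unfolding magmap_apply by (rule sum_nonzero_eq[OF fin]) (auto simp: madd_def supp_def)
  also have "\<dots> = sum f ?T + sum g ?T" unfolding madd_def by (rule sum.distrib)
  also have "sum f ?T = magmap h f t"
    unfolding magmap_apply by (rule sum_nonzero_eq[OF fin, symmetric]) (auto simp: supp_def)
  also have "sum g ?T = magmap h g t"
    unfolding magmap_apply by (rule sum_nonzero_eq[OF fin, symmetric]) (auto simp: supp_def)
  finally show "magmap h (madd f g) t = madd (magmap h f) (magmap h g) t" unfolding madd_def .
qed

lemma magmap_smult: "magmap h (msm c f) = msm c (magmap h f)"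
proof
  fix t
  show "magmap h (msm c f) t = msm c (magmap h f) t"
  proof (cases "c = 0")
    case True then show ?thesis unfolding magmap_apply msm_def by simp
  next
    case False
    then have "{s. c * f s \<noteq> 0 \<and> map_tr h s = t} = {s. f s \<noteq> 0 \<and> map_tr h s = t}" by auto
    then show ?thesis unfolding magmap_apply msm_def by (simp add: sum_distrib_left)
  qed
qed

lemma magmap_zero: "magmap h (\<lambda>t. 0) = (\<lambda>t. 0)"
  unfolding magmap_def by simp

lemma magmap_mmon: "magmap h (mmon c t) = mmon c (map_tr h t)"
proof
  fix u
  show "magmap h (mmon c t) u = mmon c (map_tr h t) u"
  proof (cases "c = 0")
    case True then show ?thesis unfolding magmap_apply mmon_def by simp
  next
    case False
    then have "{s. mmon c t s \<noteq> 0 \<and> map_tr h s = u} = (if map_tr h t = u then {t} else {})"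
      unfolding mmon_def by auto
    then show ?thesis unfolding magmap_apply by (simp add: mmon_def)
  qed
qed

lemma magmap_car:
  assumes f: "f \<in> lcar (mag X)" and h: "h ` X \<subseteq> Y"
  shows "magmap h f \<in> lcar (mag Y)"
proof -
  have s: "supp (magmap h f) \<subseteq> map_tr h ` supp f"
  proof
    fix t assume "t \<in> supp (magmap h f)"
    then have "{s. f s \<noteq> 0 \<and> map_tr h s = t} \<noteq> {}" unfolding supp_def magmap_apply by force
    then show "t \<in> map_tr h ` supp f" unfolding supp_def by blast
  qed
  have "finite (supp f)" using f unfolding mag_car by blast
  then have "finite (supp (magmap h f))" using s finite_subset by blast
  moreover have "\<forall>t\<in>supp (magmap h f). set_tr t \<subseteq> Y"
  proof
    fix t assume "t \<in> supp (magmap h f)"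
    then obtain s where "s \<in> supp f" "t = map_tr h s" using s by blast
    then show "set_tr t \<subseteq> Y" using f h unfolding mag_car by (auto simp: tr.set_map)
  qed
  ultimately show ?thesis unfolding mag_car by blast
qed

lemma mag_finite_supp: "f \<in> lcar (mag X) \<Longrightarrow> finite (supp f)"
  unfolding mag_car by blast

lemma magmap_br:
  assumes f: "f \<in> lcar (mag X)" and g: "g \<in> lcar (mag X)"
  shows "magmap h (mbr f g) = mbr (magmap h f) (magmap h g)"
proof -
  have inner: "magmap h (mbr (mmon c a) g) = mbr (magmap h (mmon c a)) (magmap h g)"
    if a: "set_tr a \<subseteq> X" and g: "g \<in> lcar (mag X)" for c a g
  proof (rule mag_additive_ext[OF g, where add=madd])
    have ca: "mmon c a \<in> lcar (mag X)" by (rule mag_mmon[OF a])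
    show "magmap h (mbr (mmon c a) (\<lambda>t. 0)) = mbr (magmap h (mmon c a)) (magmap h (\<lambda>t. 0))"
      by (simp add: mbr_zero magmap_zero)
    show "magmap h (mbr (mmon c a) (madd f1 f2)) = madd (magmap h (mbr (mmon c a) f1)) (magmap h (mbr (mmon c a) f2))"
      if "f1 \<in> lcar (mag X)" "f2 \<in> lcar (mag X)" for f1 f2
      using that ca by (simp add: mbr_addr magmap_add[OF mag_finite_supp[OF mag_br[OF ca that(1)]] mag_finite_supp[OF mag_br[OF ca that(2)]]])
    show "mbr (magmap h (mmon c a)) (magmap h (madd f1 f2)) = madd (mbr (magmap h (mmon c a)) (magmap h f1)) (mbr (magmap h (mmon c a)) (magmap h f2))"
      if "f1 \<in> lcar (mag X)" "f2 \<in> lcar (mag X)" for f1 f2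
      using that by (simp add: mbr_addr magmap_add[OF mag_finite_supp[OF that(1)] mag_finite_supp[OF that(2)]])
    show "magmap h (mbr (mmon c a) (mmon d b)) = mbr (magmap h (mmon c a)) (magmap h (mmon d b))"
      if "set_tr b \<subseteq> X" "d \<noteq> 0" for d b
      by (simp add: mbr_mmon magmap_mmon)
  qed
  show ?thesis
  proof (rule mag_additive_ext[OF f, where add=madd and \<Phi>="\<lambda>f. magmap h (mbr f g)" and \<Psi>="\<lambda>f. mbr (magmap h f) (magmap h g)", simplified])
    show "magmap h (mbr (\<lambda>t. 0) g) = mbr (magmap h (\<lambda>t. 0)) (magmap h g)"
      by (simp add: mbr_zero magmap_zero)
    show "magmap h (mbr (madd f1 f2) g) = madd (magmap h (mbr f1 g)) (magmap h (mbr f2 g))"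
      if "f1 \<in> lcar (mag X)" "f2 \<in> lcar (mag X)" for f1 f2
      using that g by (simp add: mbr_addl magmap_add[OF mag_finite_supp[OF mag_br[OF that(1) g]] mag_finite_supp[OF mag_br[OF that(2) g]]])
    show "mbr (magmap h (madd f1 f2)) (magmap h g) = madd (mbr (magmap h f1) (magmap h g)) (mbr (magmap h f2) (magmap h g))"
      if "f1 \<in> lcar (mag X)" "f2 \<in> lcar (mag X)" for f1 f2
      using that by (simp add: mbr_addl magmap_add[OF mag_finite_supp[OF that(1)] mag_finite_supp[OF that(2)]])
    show "magmap h (mbr (mmon c a) g) = mbr (magmap h (mmon c a)) (magmap h g)"
      if "set_tr a \<subseteq> X" "c \<noteq> 0" for c a
      using inner[OF that(1) g] .
  qed
qed

lemma map_tr_inv: "(\<forall>x\<in>set_tr t. g (h x) = x) \<Longrightarrow> map_tr g (map_tr h t) = t"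
  by (induction t) auto

lemma magmap_comp:
  assumes f: "f \<in> lcar (mag X)" and inv: "\<forall>x\<in>X. g (h x) = x"
  shows "magmap g (magmap h f) = f"
proof (rule mag_additive_ext[OF f, where add=madd and \<Psi>="\<lambda>f. f", simplified])
  have fu: "\<And>f. f \<in> lcar (mag X) \<Longrightarrow> finite (supp (magmap h f))"
    using magmap_car[of _ X h UNIV] mag_finite_supp by blast
  show "magmap g (magmap h (\<lambda>t. 0)) = (\<lambda>t. 0)" by (simp add: magmap_zero)
  show "magmap g (magmap h (madd f1 f2)) = madd (magmap g (magmap h f1)) (magmap g (magmap h f2))"
    if "f1 \<in> lcar (mag X)" "f2 \<in> lcar (mag X)" for f1 f2
    using that by (simp add: magmap_add[OF mag_finite_supp[OF that(1)] mag_finite_supp[OF that(2)]] magmap_add[OF fu[OF that(1)] fu[OF that(2)]])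
  show "magmap g (magmap h (mmon c t)) = mmon c t" if "set_tr t \<subseteq> X" "c \<noteq> 0" for c t
  proof -
    have "map_tr g (map_tr h t) = t" by (rule map_tr_inv) (use that inv in blast)
    then show ?thesis by (simp add: magmap_mmon)
  qed
qed
lemma tr_ev_nat:
  assumes lP: "bilinear_alg P" and h: "hom P G \<psi>"
  shows "set_tr t \<subseteq> lcar P \<Longrightarrow> \<psi> (tr_ev P t) = tr_ev G (map_tr \<psi> t)"
proof (induction t)
  case (Lf x) then show ?case by simp
next
  case (Nd l r)
  then show ?case using hom_br[OF h tr_ev_car[OF lP] tr_ev_car[OF lP]] by simp
qed

lemma mag_ev_nat:
  assumes lP: "bilinear_alg P" and lG: "bilinear_alg G" and h: "hom P G \<psi>"
    and f: "f \<in> lcar (mag (lcar P))"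
  shows "\<psi> (mag_ev P f) = mag_ev G (magmap \<psi> f)"
proof (rule mag_additive_ext[OF f, where add="ladd G" and \<Phi>="\<lambda>f. \<psi> (mag_ev P f)" and \<Psi>="\<lambda>f. mag_ev G (magmap \<psi> f)", simplified])
  have hc: "\<psi> ` lcar P \<subseteq> lcar G" using h unfolding hom_def by blast
  have mc: "\<And>f. f \<in> lcar (mag (lcar P)) \<Longrightarrow> magmap \<psi> f \<in> lcar (mag (lcar G))"
    using magmap_car hc by blast
  show "\<psi> (mag_ev P (\<lambda>t. 0)) = mag_ev G (magmap \<psi> (\<lambda>t. 0))"
    by (simp add: mag_ev_zero[OF lP] mag_ev_zero[OF lG] magmap_zero hom_zero[OF bl_vspace[OF lP] bl_vspace[OF lG] h])
  show "\<psi> (mag_ev P (madd f1 f2)) = ladd G (\<psi> (mag_ev P f1)) (\<psi> (mag_ev P f2))"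
    if "f1 \<in> lcar (mag (lcar P))" "f2 \<in> lcar (mag (lcar P))" for f1 f2
    using that by (simp add: mag_ev_add[OF lP] hom_add[OF h] mag_ev_car[OF lP])
  show "mag_ev G (magmap \<psi> (madd f1 f2)) = ladd G (mag_ev G (magmap \<psi> f1)) (mag_ev G (magmap \<psi> f2))"
    if "f1 \<in> lcar (mag (lcar P))" "f2 \<in> lcar (mag (lcar P))" for f1 f2
    using that by (simp add: magmap_add mag_finite_supp mag_ev_add[OF lG] mc)
  show "\<psi> (mag_ev P (mmon c t)) = mag_ev G (magmap \<psi> (mmon c t))"
    if t: "set_tr t \<subseteq> lcar P" "c \<noteq> 0" for c t
  proof -
    have t2: "set_tr (map_tr \<psi> t) \<subseteq> lcar G" using t hc by (auto simp: tr.set_map)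
    show ?thesis
      unfolding mag_ev_mmon[OF lP t(1)] magmap_mmon mag_ev_mmon[OF lG t2]
      using hom_smult[OF h tr_ev_car[OF lP t(1)]] tr_ev_nat[OF lP h t(1)] by simp
  qed
qed

lemma hom_mag_ev: "bilinear_alg A \<Longrightarrow> hom (mag (lcar A)) A (mag_ev A)"
  unfolding hom_def mag_simps by (auto simp: mag_ev_car mag_ev_add mag_ev_smult mag_ev_br)

lemma hom_magmap: "h ` X \<subseteq> Y \<Longrightarrow> hom (mag X) (mag Y) (magmap h)"
  unfolding hom_def mag_simps
  by (auto simp: magmap_car magmap_add magmap_smult magmap_br mag_finite_supp)

section \<open>The free Leibniz algebra\<close>

lemma bilinear_alg_quot:
  fixes A :: "('k::field, 'a) lalg"
  assumes bl: "bilinear_alg A" and I: "ideal A I"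
  shows "bilinear_alg (quot A I)"
proof -
  note vs = bl_vspace[OF bl] and sI = ideal_subspace[OF I]
  show ?thesis
    unfolding bilinear_alg_def
    by (intro conjI vspace_quot[OF vs sI]; unfold lcar_quot; intro ballI allI; (elim imageE)?)
      (simp_all add: quot_add[OF vs sI] quot_smult[OF vs sI] quot_br[OF bl I] vs_add[OF vs]
        vs_smult[OF vs] bl_br[OF bl] bl_addl[OF bl] bl_addr[OF bl] bl_smultl[OF bl] bl_smultr[OF bl])
qed

lemma ideal_mag_car: "ideal (mag X) (lcar (mag X))"
  unfolding ideal_def subspace_def by (simp add: mag_zero mag_add mag_smult mag_br)

lemma FLI_vimage:
  fixes B :: "('k::field, 'b) lalg" and \<phi> :: "('x tr \<Rightarrow> 'k) \<Rightarrow> 'b"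
  assumes bB: "bilinear_alg B" and h: "hom (mag X) B \<phi>" and J: "ideal B J"
    and rel: "\<And>x y z. x \<in> lcar B \<Longrightarrow> y \<in> lcar B \<Longrightarrow> z \<in> lcar B \<Longrightarrow> leib_defect B x y z \<in> J"
  shows "\<phi> ` FLI X \<subseteq> J"
proof -
  note bM = bilinear_alg_mag[of X]
  have "leib_rel X \<inter> lcar (mag X) \<subseteq> {f \<in> lcar (mag X). \<phi> f \<in> J}"
  proof
    fix e :: "'x tr \<Rightarrow> 'k" assume "e \<in> leib_rel X \<inter> lcar (mag X)"
    then obtain a b c where abc: "a \<in> lcar (mag X)" "b \<in> lcar (mag X)" "c \<in> lcar (mag X)"
      and e: "e = leib_defect (mag X) a b c"
      and ec: "e \<in> lcar (mag X)"
      unfolding leib_rel_def by blast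
    have "\<phi> e = leib_defect B (\<phi> a) (\<phi> b) (\<phi> c)"
      unfolding e using abc
      by (simp del: mag_simps add: hom_add[OF h] hom_smult[OF h] hom_br[OF h] bl_br[OF bM]
          vs_add[OF bl_vspace[OF bM]] vs_smult[OF bl_vspace[OF bM]])
    then show "e \<in> {f \<in> lcar (mag X). \<phi> f \<in> J}" using rel hom_car[OF h] abc ec by auto
  qed
  then have "FLI X \<subseteq> {f \<in> lcar (mag X). \<phi> f \<in> J}"
    unfolding FLI_def by (intro ideal_gen_min ideal_vimage[OF bM bB h J])
  then show ?thesis by blast
qed

lemma FLI_ideal: "ideal (mag X) (FLI X)"
  unfolding FLI_def by (rule ideal_ideal_gen[OF ideal_mag_car])

lemma mag_ev_FLI:
  assumes lb: "leibniz A"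
  shows "mag_ev A ` FLI (lcar A) \<subseteq> {lzero A}"
proof (rule FLI_vimage[OF leibniz_bilinear_alg[OF lb] hom_mag_ev[OF leibniz_bilinear_alg[OF lb]]
      ideal_zero[OF leibniz_bilinear_alg[OF lb]]])
  fix x y z assume xyz: "x \<in> lcar A" "y \<in> lcar A" "z \<in> lcar A"
  note bl = leibniz_bilinear_alg[OF lb]
  let ?q = "ldiff A (lbr A (lbr A x y) z) (lbr A (lbr A x z) y)"
  have "?q \<in> lcar A" using xyz by (simp add: bl_br[OF bl] vs_add[OF bl_vspace[OF bl]] vs_smult[OF bl_vspace[OF bl]])
  then show "leib_defect A x y z \<in> {lzero A}"
    using leibniz_identity[OF lb xyz] vs_neg[OF bl_vspace[OF bl]] by simp
qed

lemma magmap_FLI: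
  fixes h :: "'a \<Rightarrow> 'b"
  assumes "h ` X \<subseteq> Y"
  shows "magmap h ` FLI X \<subseteq> FLI Y"
proof (rule FLI_vimage[OF bilinear_alg_mag hom_magmap[OF assms] FLI_ideal])
  fix x y z :: "'b tr \<Rightarrow> 'k::field" assume xyz: "x \<in> lcar (mag Y)" "y \<in> lcar (mag Y)" "z \<in> lcar (mag Y)"
  let ?r = "leib_defect (mag Y) x y z"
  have "?r \<in> leib_rel Y" unfolding leib_rel_def using xyz by blast
  moreover have "?r \<in> lcar (mag Y)"
    using xyz by (simp add: mag_add mag_smult mag_br)
  ultimately show "?r \<in> FLI Y" unfolding FLI_def by (rule ideal_gen_gen)
qed

abbreviation fcls :: "'x set \<Rightarrow> ('x tr \<Rightarrow> 'k::field) \<Rightarrow> ('x tr \<Rightarrow> 'k) set" where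
  "fcls X f \<equiv> coset (mag X) (FLI X) f"

abbreviation FLgen :: "'x set \<Rightarrow> 'x \<Rightarrow> ('x tr \<Rightarrow> 'k::field) set" where
  "FLgen X x \<equiv> fcls X (mmon 1 (Lf x))"

lemma bilinear_alg_FL: "bilinear_alg (FL X)"
  unfolding FL_def by (rule bilinear_alg_quot[OF bilinear_alg_mag FLI_ideal])

lemma vspace_FL: "vspace (FL X)"
  by (rule bl_vspace[OF bilinear_alg_FL])

lemma lcar_FL: "lcar (FL X) = fcls X ` lcar (mag X)"
  unfolding FL_def lcar_quot ..

lemma FLgen_car: "x \<in> X \<Longrightarrow> FLgen X x \<in> lcar (FL X)"
  unfolding lcar_FL by (rule imageI, rule mag_mmon) simp

lemma hom_Fmap:
  assumes "\<psi> ` lcar P \<subseteq> lcar G"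
  shows "hom (FL (lcar P)) (FL (lcar G)) (Fmap P G \<psi>)"
proof -
  have "Fmap P G \<psi> = (\<lambda>X. fcls (lcar G) (magmap \<psi> (qrep (mag (lcar P)) (FLI (lcar P)) X)))"
    unfolding Fmap_def ..
  then show ?thesis
    unfolding FL_def
    using hom_induced[OF bilinear_alg_mag bilinear_alg_mag hom_magmap[OF assms] FLI_ideal FLI_ideal
        magmap_FLI[OF assms]] by simp
qed

lemma Fmap_fcls:
  assumes "\<psi> ` lcar P \<subseteq> lcar G" and "f \<in> lcar (mag (lcar P))"
  shows "Fmap P G \<psi> (fcls (lcar P) f) = fcls (lcar G) (magmap \<psi> f)"
  unfolding Fmap_def
  by (rule induced_coset[OF bl_vspace[OF bilinear_alg_mag] bl_vspace[OF bilinear_alg_mag]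
        hom_magmap[OF assms(1)] ideal_subspace[OF FLI_ideal] ideal_subspace[OF FLI_ideal]
        magmap_FLI[OF assms(1)] assms(2)])

lemma Fmap_FLgen:
  "\<psi> ` lcar P \<subseteq> lcar G \<Longrightarrow> x \<in> lcar P \<Longrightarrow> Fmap P G \<psi> (FLgen (lcar P) x) = FLgen (lcar G) (\<psi> x)"
  by (simp add: Fmap_fcls mag_mmon magmap_mmon)

lemma hom_proj:
  assumes lb: "leibniz A"
  shows "hom (FL (lcar A)) A (proj A)"
  unfolding FL_def proj_def
  using hom_induced_val[OF bilinear_alg_mag leibniz_bilinear_alg[OF lb]
      hom_mag_ev[OF leibniz_bilinear_alg[OF lb]] FLI_ideal mag_ev_FLI[OF lb]] by simp

lemma proj_fcls:
  assumes lb: "leibniz A" and f: "f \<in> lcar (mag (lcar A))"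
  shows "proj A (fcls (lcar A) f) = mag_ev A f"
  unfolding proj_def
  using induced_val[OF bl_vspace[OF bilinear_alg_mag] bl_vspace[OF leibniz_bilinear_alg[OF lb]]
      hom_mag_ev[OF leibniz_bilinear_alg[OF lb]] ideal_subspace[OF FLI_ideal] mag_ev_FLI[OF lb] f] .

lemma proj_Fmap:
  assumes lP: "leibniz P" and lG: "leibniz G" and h: "hom P G \<psi>" and W: "W \<in> lcar (FL (lcar P))"
  shows "proj G (Fmap P G \<psi> W) = \<psi> (proj P W)"
proof -
  have hc: "\<psi> ` lcar P \<subseteq> lcar G" using h unfolding hom_def by blast
  obtain f where f: "f \<in> lcar (mag (lcar P))" and Wf: "W = fcls (lcar P) f" using W unfolding lcar_FL by blast
  show ?thesis
    unfolding Wf Fmap_fcls[OF hc f] proj_fcls[OF lP f] proj_fcls[OF lG magmap_car[OF f hc]]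
    by (rule mag_ev_nat[OF leibniz_bilinear_alg[OF lP] leibniz_bilinear_alg[OF lG] h f, symmetric])
qed

definition FL_lift :: "'x set \<Rightarrow> ('k::field, 'a) lalg \<Rightarrow> ('x \<Rightarrow> 'a) \<Rightarrow> ('x tr \<Rightarrow> 'k) set \<Rightarrow> 'a" where
  "FL_lift X P s W = mag_ev P (magmap s (qrep (mag X) (FLI X) W))"

context
  fixes P :: "('k::field, 'a) lalg" and s :: "'x \<Rightarrow> 'a" and X :: "'x set"
  assumes lP: "leibniz P" and sc: "s ` X \<subseteq> lcar P"
begin

lemma hom_mag_lift: "hom (mag X) P (mag_ev P \<circ> magmap s)"
  by (rule hom_comp[OF hom_magmap[OF sc] hom_mag_ev[OF leibniz_bilinear_alg[OF lP]]])

lemma mag_lift_FLI: "(mag_ev P \<circ> magmap s) ` FLI X \<subseteq> {lzero P}"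
  using magmap_FLI[OF sc] mag_ev_FLI[OF lP] by (auto simp: image_subset_iff)

lemma hom_FL_lift: "hom (FL X) P (FL_lift X P s)"
  unfolding FL_def FL_lift_def
  using hom_induced_val[OF bilinear_alg_mag leibniz_bilinear_alg[OF lP] hom_mag_lift FLI_ideal
      mag_lift_FLI] by simp

lemma FL_lift_fcls: "f \<in> lcar (mag X) \<Longrightarrow> FL_lift X P s (fcls X f) = mag_ev P (magmap s f)"
  unfolding FL_lift_def
  using induced_val[OF bl_vspace[OF bilinear_alg_mag] bl_vspace[OF leibniz_bilinear_alg[OF lP]]
      hom_mag_lift ideal_subspace[OF FLI_ideal] mag_lift_FLI] by simp

lemma FL_lift_FLgen: "x \<in> X \<Longrightarrow> FL_lift X P s (FLgen X x) = s x"
  using sc vs_one[OF bl_vspace[OF leibniz_bilinear_alg[OF lP]]]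
  by (simp add: FL_lift_fcls mag_mmon magmap_mmon mag_ev_mmon leibniz_bilinear_alg[OF lP] image_subset_iff)

end

lemma proj_FL_lift:
  assumes lP: "leibniz P" and lG: "leibniz G" and h: "hom P G \<psi>"
    and sc: "s ` lcar G \<subseteq> lcar P" and inv: "\<forall>x\<in>lcar G. \<psi> (s x) = x"
    and W: "W \<in> lcar (FL (lcar G))"
  shows "\<psi> (FL_lift (lcar G) P s W) = proj G W"
proof -
  obtain f where f: "f \<in> lcar (mag (lcar G))" and Wf: "W = fcls (lcar G) f" using W unfolding lcar_FL by blast
  have "\<psi> (mag_ev P (magmap s f)) = mag_ev G (magmap \<psi> (magmap s f))"
    by (rule mag_ev_nat[OF leibniz_bilinear_alg[OF lP] leibniz_bilinear_alg[OF lG] h magmap_car[OF f sc]])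
  then show ?thesis
    unfolding Wf FL_lift_fcls[OF lP sc f] proj_fcls[OF lG f] magmap_comp[where g=\<psi> and h=s, OF f inv] .
qed

lemma proj_FLgen: "leibniz A \<Longrightarrow> x \<in> lcar A \<Longrightarrow> proj A (FLgen (lcar A) x) = x"
  by (simp add: proj_fcls mag_mmon mag_ev_mmon leibniz_bilinear_alg vs_one bl_vspace)

lemma brLie_gen: "m \<in> M \<Longrightarrow> n \<in> N \<Longrightarrow> lsymbr A m n \<in> lcar A \<Longrightarrow> lsymbr A m n \<in> brLie A M N"
  unfolding brLie_def by (rule lspan_gen) blast

lemma subspace_brLie: "vspace A \<Longrightarrow> subspace A (brLie A M N)"
  unfolding brLie_def by (rule subspace_lspan)

lemma brLie_vimage:
  assumes vA: "vspace A" and vB: "vspace B" and h: "hom A B \<phi>" and T: "subspace B T"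
    and gen: "\<And>m n. m \<in> M \<Longrightarrow> n \<in> N \<Longrightarrow> lsymbr A m n \<in> lcar A \<Longrightarrow> \<phi> (lsymbr A m n) \<in> T"
  shows "\<phi> ` brLie A M N \<subseteq> T"
proof -
  have "brLie A M N \<subseteq> {x \<in> lcar A. \<phi> x \<in> T}"
    unfolding brLie_def using gen by (intro lspan_min subspace_vimage[OF vA vB h T]) blast
  then show ?thesis by blast
qed

section \<open>Lie-stem covers\<close>

lemma lie_stem_coverD:
  assumes "lie_stem_cover P G \<psi>"
  shows "leibniz P" "leibniz G" "hom P G \<psi>" "\<psi> ` lcar P = lcar G" "kerh P G \<psi> \<subseteq> ZLie P"
    "\<forall>Y\<in>lcar (Mult P). Mmap P G \<psi> Y = lzero (Mult G)"
  using assms unfolding lie_stem_cover_def by blast+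

lemma rel_iff: "W \<in> rel A \<longleftrightarrow> W \<in> lcar (FL (lcar A)) \<and> proj A W = lzero A"
  unfolding rel_def kerh_def by blast

lemma Fmap_brLie_rel:
  fixes P :: "('k::field, 'a) lalg" and G :: "('k, 'g) lalg"
  assumes lP: "leibniz P" and lG: "leibniz G" and h: "hom P G \<psi>"
  shows "Fmap P G \<psi> ` brLie (FL (lcar P)) (lcar (FL (lcar P))) (rel P)
           \<subseteq> brLie (FL (lcar G)) (lcar (FL (lcar G))) (rel G)"
proof -
  have hc: "\<psi> ` lcar P \<subseteq> lcar G" using h unfolding hom_def by blast
  note hF = hom_Fmap[OF hc]
  show ?thesis
  proof (rule brLie_vimage[OF vspace_FL vspace_FL hF subspace_brLie[OF vspace_FL]])
    fix m n :: "('a tr \<Rightarrow> 'k) set" assume m: "m \<in> lcar (FL (lcar P))" and n: "n \<in> rel P"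
    have nc: "n \<in> lcar (FL (lcar P))" and pn: "proj P n = lzero P" using n unfolding rel_iff by auto
    have "proj G (Fmap P G \<psi> n) = lzero G"
      using proj_Fmap[OF lP lG h nc] pn
        hom_zero[OF bl_vspace[OF leibniz_bilinear_alg[OF lP]] bl_vspace[OF leibniz_bilinear_alg[OF lG]] h]
      by simp
    then have "Fmap P G \<psi> n \<in> rel G" unfolding rel_iff using hom_car[OF hF nc] by blast
    moreover have "lsymbr (FL (lcar G)) (Fmap P G \<psi> m) (Fmap P G \<psi> n) \<in> lcar (FL (lcar G))"
      using hom_car[OF hF m] hom_car[OF hF nc]
      by (simp add: bl_br[OF bilinear_alg_FL] vs_add[OF vspace_FL])
    ultimately show "Fmap P G \<psi> (lsymbr (FL (lcar P)) m n) \<in> brLie (FL (lcar G)) (lcar (FL (lcar G))) (rel G)"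
      using hom_lsymbr[OF hF bilinear_alg_FL m nc] hom_car[OF hF m] by (simp add: brLie_gen)
  qed
qed

lemma FL_lift_brLie_rel:
  fixes P :: "('k::field, 'a) lalg" and G :: "('k, 'g) lalg"
  assumes lP: "leibniz P" and lG: "leibniz G" and h: "hom P G \<psi>"
    and sc: "s ` lcar G \<subseteq> lcar P" and inv: "\<forall>x\<in>lcar G. \<psi> (s x) = x"
    and k: "kerh P G \<psi> \<subseteq> ZLie P"
  shows "FL_lift (lcar G) P s ` brLie (FL (lcar G)) (lcar (FL (lcar G))) (rel G) \<subseteq> {lzero P}"
proof -
  note bP = leibniz_bilinear_alg[OF lP]
  note hL = hom_FL_lift[OF lP sc]
  show ?thesis
  proof (rule brLie_vimage[OF vspace_FL bl_vspace[OF bP] hL ideal_subspace[OF ideal_zero[OF bP]]])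
    fix m n :: "('g tr \<Rightarrow> 'k) set" assume m: "m \<in> lcar (FL (lcar G))" and n: "n \<in> rel G"
    let ?L = "FL_lift (lcar G) P s"
    have nc: "n \<in> lcar (FL (lcar G))" and pn: "proj G n = lzero G" using n unfolding rel_iff by auto
    have "?L n \<in> kerh P G \<psi>"
      unfolding kerh_def using proj_FL_lift[OF lP lG h sc inv nc] pn hom_car[OF hL nc] by simp
    then have "lsymbr P (?L m) (?L n) = lzero P"
      using k hom_car[OF hL m] unfolding ZLie_def by blast
    then show "?L (lsymbr (FL (lcar G)) m n) \<in> {lzero P}"
      using hom_lsymbr[OF hL bilinear_alg_FL m nc] by simp
  qed
qed

lemma Fmap_brLie_rel_of_Mmap_zero:
  assumes lP: "leibniz P" and lG: "leibniz G" and h: "hom P G \<psi>"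
    and Z: "Z \<in> rel P \<inter> brLie (FL (lcar P)) (lcar (FL (lcar P))) (lcar (FL (lcar P)))"
    and zero: "Mmap P G \<psi> (coset (FL (lcar P)) (brLie (FL (lcar P)) (lcar (FL (lcar P))) (rel P)) Z)
                 = lzero (Mult G)"
  shows "Fmap P G \<psi> Z \<in> brLie (FL (lcar G)) (lcar (FL (lcar G))) (rel G)"
proof -
  let ?F1 = "FL (lcar P)" and ?FG = "FL (lcar G)"
  let ?I1 = "brLie ?F1 (lcar ?F1) (rel P)" and ?IG = "brLie ?FG (lcar ?FG) (rel G)"
  let ?S1 = "rel P \<inter> brLie ?F1 (lcar ?F1) (lcar ?F1)"
  have hc: "\<psi> ` lcar P \<subseteq> lcar G" using h unfolding hom_def by blast
  note hF = hom_Fmap[OF hc]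
  have S1c: "?S1 \<subseteq> lcar ?F1" using rel_iff by blast
  have Zc: "Z \<in> lcar ?F1" using Z S1c by blast
  have "coset ?F1 ?I1 Z \<in> lcar (quot (restr ?F1 ?S1) ?I1)" unfolding quot_restr_ops using Z by (rule imageI)
  note rep = qrep_restr[OF this]
  define Z' where "Z' = qrep (restr ?F1 ?S1) ?I1 (coset ?F1 ?I1 Z)"
  have Z'c: "Z' \<in> lcar ?F1" using rep(1) S1c unfolding Z'_def by blast
  have "Mmap P G \<psi> (coset ?F1 ?I1 Z) = coset ?FG ?IG (Fmap P G \<psi> Z')"
    unfolding Mmap_def Let_def Z'_def ..
  moreover have "lzero (Mult G) = coset ?FG ?IG (lzero ?FG)"
    unfolding Mult_def Let_def quot_restr_ops(5) ..
  ultimately have "coset ?FG ?IG (Fmap P G \<psi> Z') = coset ?FG ?IG (lzero ?FG)" using zero by simp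
  then have FZ': "Fmap P G \<psi> Z' \<in> ?IG"
    using coset_eq_zero_iff[OF vspace_FL subspace_brLie[OF vspace_FL] hom_car[OF hF Z'c]] by blast
  obtain i where i: "i \<in> ?I1" "Z' = ladd ?F1 Z i"
    using coset_eqD[OF vspace_FL subspace_brLie[OF vspace_FL] Z'c Zc] rep(2)[symmetric] unfolding Z'_def by metis
  have ic: "i \<in> lcar ?F1" using i(1) subspace_car[OF subspace_brLie[OF vspace_FL]] by blast
  have Fi: "Fmap P G \<psi> i \<in> ?IG" using Fmap_brLie_rel[OF lP lG h] i(1) by blast
  have "ladd ?FG (Fmap P G \<psi> Z) (Fmap P G \<psi> i) \<in> ?IG"
    using FZ' unfolding i(2) hom_add[OF hF Zc ic] .
  then show ?thesis
    by (rule subspace_add_cancel[OF vspace_FL subspace_brLie[OF vspace_FL] hom_car[OF hF Zc] Fi])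
qed

lemma FLgen_lsymbr_brLie_rel:
  fixes P :: "('k::field, 'a) lalg" and G :: "('k, 'g) lalg"
  assumes c: "lie_stem_cover P G \<psi>"
    and sc: "s ` lcar G \<subseteq> lcar P" and inv: "\<forall>x\<in>lcar G. \<psi> (s x) = x"
    and v: "v \<in> lcar G" and u: "u \<in> lcar G" and zu: "s u \<in> ZLie P"
  shows "lsymbr (FL (lcar G)) (FLgen (lcar G) v) (FLgen (lcar G) u)
           \<in> brLie (FL (lcar G)) (lcar (FL (lcar G))) (rel G)"
proof -
  note lP = lie_stem_coverD(1)[OF c] and lG = lie_stem_coverD(2)[OF c] and h = lie_stem_coverD(3)[OF c]
  let ?F1 = "FL (lcar P)" and ?FG = "FL (lcar G)"
  have hc: "\<psi> ` lcar P \<subseteq> lcar G" using h unfolding hom_def by blast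
  note hF = hom_Fmap[OF hc] and bF = bilinear_alg_FL
  have sv: "s v \<in> lcar P" and su: "s u \<in> lcar P" using sc v u by auto
  note gv = FLgen_car[OF sv] and gu = FLgen_car[OF su]
  define Z :: "('a tr \<Rightarrow> 'k) set" where "Z = lsymbr ?F1 (FLgen (lcar P) (s v)) (FLgen (lcar P) (s u))"
  have Zc: "Z \<in> lcar ?F1"
    unfolding Z_def by (rule vs_add[OF vspace_FL bl_br[OF bF gv gu] bl_br[OF bF gu gv]])
  have "proj P Z = lsymbr P (s v) (s u)"
    unfolding Z_def hom_lsymbr[OF hom_proj[OF lP] bF gv gu] proj_FLgen[OF lP sv] proj_FLgen[OF lP su] ..
  also have "\<dots> = lzero P" using zu sv unfolding ZLie_def by blast
  finally have "Z \<in> rel P" unfolding rel_iff using Zc by blast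
  moreover have "Z \<in> brLie ?F1 (lcar ?F1) (lcar ?F1)"
    using brLie_gen[OF gv gu] Zc unfolding Z_def by blast
  moreover have "Mmap P G \<psi> (coset ?F1 (brLie ?F1 (lcar ?F1) (rel P)) Z) = lzero (Mult G)"
    using lie_stem_coverD(6)[OF c] calculation
    unfolding Mult_def Let_def quot_restr_ops by blast
  ultimately have "Fmap P G \<psi> Z \<in> brLie ?FG (lcar ?FG) (rel G)"
    by (intro Fmap_brLie_rel_of_Mmap_zero[OF lP lG h]) blast+
  moreover have "Fmap P G \<psi> Z = lsymbr ?FG (FLgen (lcar G) v) (FLgen (lcar G) u)"
    unfolding Z_def hom_lsymbr[OF hF bF gv gu] Fmap_FLgen[OF hc sv] Fmap_FLgen[OF hc su]
    using inv v u by simp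
  ultimately show ?thesis by simp
qed

lemma section_lsymbr_vanishes:
  fixes G :: "('k::field, 'g) lalg" and P1 :: "('k, 'a) lalg" and P2 :: "('k, 'b) lalg"
  assumes c1: "lie_stem_cover P1 G \<psi>1" and c2: "lie_stem_cover P2 G \<psi>2"
    and sc1: "s1 ` lcar G \<subseteq> lcar P1" and inv1: "\<forall>x\<in>lcar G. \<psi>1 (s1 x) = x"
    and sc2: "s2 ` lcar G \<subseteq> lcar P2" and inv2: "\<forall>x\<in>lcar G. \<psi>2 (s2 x) = x"
    and v: "v \<in> lcar G" and z: "z \<in> lcar G" and s1z: "s1 z \<in> ZLie P1"
  shows "lsymbr P2 (s2 v) (s2 z) = lzero P2"
proof -
  note l2 = lie_stem_coverD(1)[OF c2] and lG = lie_stem_coverD(2)[OF c2]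
  have "FL_lift (lcar G) P2 s2 (lsymbr (FL (lcar G)) (FLgen (lcar G) v) (FLgen (lcar G) z)) = lzero P2"
    using FL_lift_brLie_rel[OF l2 lG lie_stem_coverD(3)[OF c2] sc2 inv2 lie_stem_coverD(5)[OF c2]]
      FLgen_lsymbr_brLie_rel[OF c1 sc1 inv1 v z s1z] by blast
  then show ?thesis
    unfolding hom_lsymbr[OF hom_FL_lift[OF l2 sc2] bilinear_alg_FL FLgen_car[OF v] FLgen_car[OF z]]
      FL_lift_FLgen[OF l2 sc2 v] FL_lift_FLgen[OF l2 sc2 z] .
qed

lemma ZLie_image_subset:
  fixes G :: "('k::field, 'g) lalg" and P1 :: "('k, 'a) lalg" and P2 :: "('k, 'b) lalg"
  assumes c1: "lie_stem_cover P1 G \<psi>1" and c2: "lie_stem_cover P2 G \<psi>2"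
  shows "\<psi>1 ` ZLie P1 \<subseteq> \<psi>2 ` ZLie P2"
proof
  note cov1 = lie_stem_coverD[OF c1] and cov2 = lie_stem_coverD[OF c2]
  note b1 = leibniz_bilinear_alg[OF cov1(1)] and b2 = leibniz_bilinear_alg[OF cov2(1)]
  note vG = bl_vspace[OF leibniz_bilinear_alg[OF cov1(2)]]
  obtain s1 where sc1: "s1 ` lcar G \<subseteq> lcar P1" and inv1: "\<forall>x\<in>lcar G. \<psi>1 (s1 x) = x"
    using section_exists[OF cov1(4)] by blast
  obtain s2 where sc2: "s2 ` lcar G \<subseteq> lcar P2" and inv2: "\<forall>x\<in>lcar G. \<psi>2 (s2 x) = x"
    using section_exists[OF cov2(4)] by blast
  fix z assume "z \<in> \<psi>1 ` ZLie P1"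
  then obtain w where w: "w \<in> ZLie P1" and z: "z = \<psi>1 w" by blast
  have zG: "z \<in> lcar G" unfolding z by (rule hom_car[OF cov1(3) ZLie_car[OF w]])
  have s1z: "s1 z \<in> lcar P1" and s2z: "s2 z \<in> lcar P2" using sc1 sc2 zG by auto
  have s1Z: "s1 z \<in> ZLie P1"
    by (rule ZLie_of_kerh[OF b1 vG cov1(3) cov1(5) s1z w]) (use inv1 zG z in simp)
  have "lsymbr P2 y (s2 z) = lzero P2" if y: "y \<in> lcar P2" for y
  proof -
    have v: "\<psi>2 y \<in> lcar G" by (rule hom_car[OF cov2(3) y])
    have "lsymbr P2 y (s2 z) = lsymbr P2 (s2 (\<psi>2 y)) (s2 z)"
      using lsymbr_kerh_eq[OF b2 vG cov2(3) cov2(5) y _ _ s2z, of "s2 (\<psi>2 y)"] sc2 inv2 v by auto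
    also have "\<dots> = lzero P2" by (rule section_lsymbr_vanishes[OF c1 c2 sc1 inv1 sc2 inv2 v zG s1Z])
    finally show ?thesis .
  qed
  then have "s2 z \<in> ZLie P2" unfolding ZLie_def using s2z by blast
  moreover have "z = \<psi>2 (s2 z)" using inv2 zG by simp
  ultimately show "z \<in> \<psi>2 ` ZLie P2" by (rule rev_image_eqI)
qed

theorem mainTheorem18:
  fixes g :: "('k::field, 'g) lalg"
    and p1 :: "('k, 'a) lalg" and \<psi>1 :: "'a \<Rightarrow> 'g"
    and p2 :: "('k, 'b) lalg" and \<psi>2 :: "'b \<Rightarrow> 'g"
  assumes "(2::'k) \<noteq> 0"
    and "leibniz g" and "fin_dim g" and "fin_dim (Mult g)"
    and "lie_stem_cover p1 g \<psi>1"
    and "lie_stem_cover p2 g \<psi>2"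
  shows "isomorphic (quot (restr p1 (ZLie p1)) (kerh p1 g \<psi>1))
                    (quot (restr p2 (ZLie p2)) (kerh p2 g \<psi>2))"
proof -
  have c1: "lie_stem_cover p1 g \<psi>1" and c2: "lie_stem_cover p2 g \<psi>2" using assms(5,6) .
  note cover1 = lie_stem_coverD[OF c1] and cover2 = lie_stem_coverD[OF c2]
  have "\<psi>1 ` ZLie p1 = \<psi>2 ` ZLie p2"
    using ZLie_image_subset[OF c1 c2] ZLie_image_subset[OF c2 c1] by (rule subset_antisym)
  moreover have "ZLie p1 \<subseteq> lcar p1" "ZLie p2 \<subseteq> lcar p2" by (blast intro: ZLie_car)+
  ultimately show ?thesis
    using isomorphic_quot_restr_kerh[OF leibniz_bilinear_alg[OF cover1(1)] leibniz_bilinear_alg[OF cover2(1)]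
        bl_vspace[OF leibniz_bilinear_alg[OF cover1(2)]] cover1(3) cover2(3) cover2(4)] by blast
qed

end
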